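(* Let $(w,d,N,L)$ be a stable Levi–Schubert quadruple with $w\ne(1,\dots,d)$. Then $(w,d,N,L)$ is spherical if and only if its reduction $(\overline w,\overline d,\overline N,\overline L)$ is spherical.
   Context: Work over $\mathbb{C}$. $G_{d,N}$ is the Grassmannian of $d$-planes in $\mathbb{C}^N$ with its Plücker embedding; $B\subset GL_N$ the upper triangular matrices. $I_{d,N}$ is the set of sequences $(i_1<\dots<i_d)$ in $\{1,\dots,N\}$ with the componentwise (Bruhat) order; for $w=(\ell_1,\dots,\ell_d)\in I_{d,N}$, $X(w)$ is the closure of $B\cdot[e_{\ell_1}\wedge\dots\wedge e_{\ell_d}]$ in $G_{d,N}$. A (standard) Levi subgroup $L$ of $GL_N$ is given by integers $0=j_0<j_1<\dots<j_{b_L}=N$: $L$ is the group of invertible block diagonal matrices with diagonal blocks of sizes $N_k=j_k-j_{k-1}$. A Levi–Schubert quadruple $(w,d,N,L)$ consists of integers $1\le d<N$, $w\in I_{d,N}$ and such an $L$; it is stable if $X(w)$ is stable under left multiplication by $L$, and a stable quadruple is spherical if $X(w)$ is a spherical $L$-variety, i.e. has a dense open orbit of a Borel subgroup of $L$. Reduction: for $w\ne(1,\dots,d)$ let $p\ge0$ be maximal with $\ell_i=i$ for $i\le p$; the reduction is $(\overline w,\overline d,\overline N,\overline L)$ with $\overline w=(\ell_{p+1}-p,\dots,\ell_d-p)$, $\overline d=d-p$, $\overline N=\ell_d-p$, and $\overline L\subseteq GL_{\overline N}$ the image of $L$ under the map sending a matrix to its principal submatrix on rows and columns $p+1,\dots,\ell_d$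 (for stable quadruples this is a standard Levi subgroup of $GL_{\overline N}$ and the reduction is stable). *)

theory Defs
  imports Complex_Main
begin

text \<open>Vectors of C^N are functions nat => complex supported on {1..N};
  N x M complex matrices are functions nat => nat => complex (row, column), indices 1-based.
  A point of the Grassmannian G_{d,N} is a d-dimensional subspace of C^N, given as the
  column span of a frame (an N x d matrix of rank d).  The Grassmannian carries its
  classical (analytic) topology, i.e. the quotient topology from the open set of frames;
  closure is described by convergent sequences of frames.\<close>

definition ident :: "nat \<Rightarrow> nat \<Rightarrow> nat \<Rightarrow> complex" where
  "ident N = (\<lambda>i j. if i = j \<and> i \<in> {1..N} then 1 else 0)"

definition matmul :: "nat \<Rightarrow> (nat \<Rightarrow> nat \<Rightarrow> complex) \<Rightarrow> (nat \<Rightarrow> nat \<Rightarrow> complex) \<Rightarrow> (nat \<Rightarrow> nat \<Rightarrow> complex)" where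
  "matmul N a b = (\<lambda>i j. if i \<in> {1..N} \<and> j \<in> {1..N} then (\<Sum>k=1..N. a i k * b k j) else 0)"

definition sqmat :: "nat \<Rightarrow> (nat \<Rightarrow> nat \<Rightarrow> complex) \<Rightarrow> bool" where
  "sqmat N g \<longleftrightarrow> (\<forall>i j. g i j \<noteq> 0 \<longrightarrow> i \<in> {1..N} \<and> j \<in> {1..N})"

definition GL :: "nat \<Rightarrow> (nat \<Rightarrow> nat \<Rightarrow> complex) set" where
  "GL N = {g. sqmat N g \<and> (\<exists>h. sqmat N h \<and> matmul N g h = ident N \<and> matmul N h g = ident N)}"

definition borel :: "nat \<Rightarrow> (nat \<Rightarrow> nat \<Rightarrow> complex) set" where
  "borel N = {g \<in> GL N. \<forall>i j. j < i \<longrightarrow> g i j = 0}"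

definition levi_data :: "nat \<Rightarrow> nat list \<Rightarrow> bool" where
  "levi_data N js \<longleftrightarrow> length js \<ge> 2 \<and> hd js = 0 \<and> sorted_wrt (<) js \<and> last js = N"

definition same_block :: "nat list \<Rightarrow> nat \<Rightarrow> nat \<Rightarrow> bool" where
  "same_block js i j \<longleftrightarrow> (\<exists>k. Suc k < length js \<and> js!k < i \<and> i \<le> js!Suc k \<and> js!k < j \<and> j \<le> js!Suc k)"

definition levi :: "nat \<Rightarrow> nat list \<Rightarrow> (nat \<Rightarrow> nat \<Rightarrow> complex) set" where
  "levi N js = {g \<in> GL N. \<forall>i j. g i j \<noteq> 0 \<longrightarrow> same_block js i j}"

definition Iseq :: "nat \<Rightarrow> nat \<Rightarrow> nat list set" where
  "Iseq d N = {w. length w = d \<and> sorted_wrt (<) w \<and> set w \<subseteq> {1..N}}"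

definition frame :: "nat \<Rightarrow> nat \<Rightarrow> (nat \<Rightarrow> nat \<Rightarrow> complex) \<Rightarrow> bool" where
  "frame N d M \<longleftrightarrow> (\<forall>i j. M i j \<noteq> 0 \<longrightarrow> i \<in> {1..N} \<and> j \<in> {1..d}) \<and>
     (\<forall>c::nat \<Rightarrow> complex. (\<forall>i. (\<Sum>j=1..d. c j * M i j) = 0) \<longrightarrow> (\<forall>j\<in>{1..d}. c j = 0))"

definition colspan :: "nat \<Rightarrow> nat \<Rightarrow> (nat \<Rightarrow> nat \<Rightarrow> complex) \<Rightarrow> (nat \<Rightarrow> complex) set" where
  "colspan N d M = {v. \<exists>c::nat \<Rightarrow> complex. v = (\<lambda>i. if i \<in> {1..N} then (\<Sum>j=1..d. c j * M i j) else 0)}"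

definition grass :: "nat \<Rightarrow> nat \<Rightarrow> (nat \<Rightarrow> complex) set set" where
  "grass N d = {V. \<exists>M. frame N d M \<and> V = colspan N d M}"

definition gclosure :: "nat \<Rightarrow> nat \<Rightarrow> (nat \<Rightarrow> complex) set set \<Rightarrow> (nat \<Rightarrow> complex) set set" where
  "gclosure N d S = {V. \<exists>M F. frame N d M \<and> V = colspan N d M \<and>
      (\<forall>k. frame N d (F k) \<and> colspan N d (F k) \<in> S) \<and>
      (\<forall>i j. (\<lambda>k. F k i j) \<longlonglongrightarrow> M i j)}"

definition rel_open :: "nat \<Rightarrow> nat \<Rightarrow> (nat \<Rightarrow> complex) set set \<Rightarrow> (nat \<Rightarrow> complex) set set \<Rightarrow> bool" where
  "rel_open N d Orb X \<longleftrightarrow> Orb \<subseteq> X \<and> Orb \<inter> gclosure N d (X - Orb) = {}"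

definition act :: "nat \<Rightarrow> (nat \<Rightarrow> nat \<Rightarrow> complex) \<Rightarrow> (nat \<Rightarrow> complex) set \<Rightarrow> (nat \<Rightarrow> complex) set" where
  "act N g V = (\<lambda>v. \<lambda>i. if i \<in> {1..N} then (\<Sum>j=1..N. g i j * v j) else 0) ` V"

definition coord_plane :: "nat \<Rightarrow> nat list \<Rightarrow> (nat \<Rightarrow> complex) set" where
  "coord_plane N w = colspan N (length w) (\<lambda>i j. if j \<in> {1..length w} \<and> i = w!(j-1) then 1 else 0)"

definition schubert :: "nat list \<Rightarrow> nat \<Rightarrow> nat \<Rightarrow> (nat \<Rightarrow> complex) set set" where
  "schubert w d N = gclosure N d ((\<lambda>g. act N g (coord_plane N w)) ` borel N)"

definition stable :: "nat list \<Rightarrow> nat \<Rightarrow> nat \<Rightarrow> (nat \<Rightarrow> nat \<Rightarrow> complex) set \<Rightarrow> bool" where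
  "stable w d N L \<longleftrightarrow> (\<forall>g\<in>L. \<forall>V\<in>schubert w d N. act N g V \<in> schubert w d N)"

definition spherical :: "nat list \<Rightarrow> nat \<Rightarrow> nat \<Rightarrow> (nat \<Rightarrow> nat \<Rightarrow> complex) set \<Rightarrow> bool" where
  "spherical w d N L \<longleftrightarrow> stable w d N L \<and>
     (\<exists>V0 \<in> schubert w d N.
        let Orb = (\<lambda>g. act N g V0) ` (L \<inter> borel N) in
        rel_open N d Orb (schubert w d N) \<and> schubert w d N \<subseteq> gclosure N d Orb)"

definition red_p :: "nat list \<Rightarrow> nat" where
  "red_p w = (GREATEST p. p \<le> length w \<and> (\<forall>i\<in>{1..p}. w!(i-1) = i))"

definition red_w :: "nat list \<Rightarrow> nat list" where
  "red_w w = map (\<lambda>x. x - red_p w) (drop (red_p w) w)"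

definition red_d :: "nat list \<Rightarrow> nat" where
  "red_d w = length w - red_p w"

definition red_N :: "nat list \<Rightarrow> nat" where
  "red_N w = last w - red_p w"

definition principal_sub :: "nat \<Rightarrow> nat \<Rightarrow> (nat \<Rightarrow> nat \<Rightarrow> complex) \<Rightarrow> (nat \<Rightarrow> nat \<Rightarrow> complex)" where
  "principal_sub p m g = (\<lambda>i j. if i \<in> {1..m-p} \<and> j \<in> {1..m-p} then g (i+p) (j+p) else 0)"

definition red_L :: "nat list \<Rightarrow> (nat \<Rightarrow> nat \<Rightarrow> complex) set \<Rightarrow> (nat \<Rightarrow> nat \<Rightarrow> complex) set" where
  "red_L w L = principal_sub (red_p w) (last w) ` L"

end

theory Submission
  imports Defs "HOL-Library.Function_Algebras" "HOL-Analysis.Analysis"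
begin

text \<open>Let \<open>p\<close> be the length of the initial run \<open>1, \<dots>, p\<close> of \<open>w\<close> and \<open>n = l\<^sub>d - p\<close>. The map
  \<open>U \<mapsto> E\<^sub>p \<oplus> U\<close>, with \<open>E\<^sub>p = span(e\<^sub>1, \<dots>, e\<^sub>p)\<close> and \<open>U\<close> moved to the coordinates \<open>p+1, \<dots>, p+n\<close>,
  is injective and commutes with closures: frames converge blockwise, and conversely the limit of
  planes with \<open>E\<^sub>p \<subseteq> V \<subseteq> C\<^sup>p\<^sup>+\<^sup>n\<close> has the same property, while frames of the projected planes,
  built from a fixed choice of columns, converge as well. An upper triangular \<open>g\<close> acts on \<open>E\<^sub>p \<oplus> U\<close>
  through its diagonal block on \<open>p+1, \<dots>, p+n\<close>, so the map sends the Borel orbit of the reduced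
  coordinate plane onto that of \<open>w\<close>, and \<open>X(w) = E\<^sub>p \<oplus> X(w\<^sub>r\<^sub>e\<^sub>d)\<close>. Stability forces every block of
  \<open>L\<close> to lie in \<open>{1..p}\<close> or in \<open>{p+1..N}\<close>, since the transposition of \<open>p\<close> and \<open>p+1\<close> would move the
  coordinate plane of \<open>w\<close> out of \<open>X(w)\<close>. Hence the Borel orbits of \<open>L\<close> on \<open>X(w)\<close> are the images of
  those of the reduced Levi subgroup on \<open>X(w\<^sub>r\<^sub>e\<^sub>d)\<close>, and open dense orbits correspond.\<close>

type_synonym cvector = "nat \<Rightarrow> complex"
type_synonym cmatrix = "nat \<Rightarrow> nat \<Rightarrow> complex"

definition supp :: "nat \<Rightarrow> cvector \<Rightarrow> bool" where
  "supp n v \<longleftrightarrow> (\<forall>i. v i \<noteq> 0 \<longrightarrow> i \<in> {1..n})"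

definition sc :: "complex \<Rightarrow> cvector \<Rightarrow> cvector" where
  "sc c v = (\<lambda>i. c * v i)"

definition col :: "nat \<Rightarrow> cmatrix \<Rightarrow> nat \<Rightarrow> cvector" where
  "col N M j = (\<lambda>i. if i \<in> {1..N} then M i j else 0)"

interpretation V: vector_space sc
  by unfold_locales (auto simp: sc_def fun_eq_iff algebra_simps)

lemma sum_fun_apply: "(\<Sum>x\<in>A. f x) i = (\<Sum>x\<in>A. f x i)"
  by (induction A rule: infinite_finite_induct) auto

lemma sum_sc_apply: "(\<Sum>v\<in>A. sc (u v) (f v)) i = (\<Sum>v\<in>A. u v * f v i)"
  by (simp add: sum_fun_apply sc_def)

lemma supp_0 [simp]: "supp n 0"
  by (auto simp: supp_def)

lemma supp_add: "supp n a \<Longrightarrow> supp n b \<Longrightarrow> supp n (a + b)"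
  unfolding supp_def plus_fun_def by (metis add.right_neutral add.left_neutral)

lemma supp_diff: "supp n a \<Longrightarrow> supp n b \<Longrightarrow> supp n (a - b)"
  unfolding supp_def by (metis diff_self minus_apply)

section \<open>Column spans and frames\<close>

lemma colspan_supp: "v \<in> colspan N d M \<Longrightarrow> supp N v"
  by (auto simp: colspan_def supp_def split: if_splits)

lemma subspace_colspan: "V.subspace (colspan N d M)"
  unfolding V.subspace_def
proof (intro conjI ballI allI)
  show "0 \<in> colspan N d M"
    unfolding colspan_def by (rule CollectI, rule exI[of _ "\<lambda>_. 0"]) (auto simp: fun_eq_iff)
next
  fix x y assume "x \<in> colspan N d M" "y \<in> colspan N d M"
  then obtain c c' where "x = (\<lambda>i. if i \<in> {1..N} then \<Sum>j = 1..d. c j * M i j else 0)"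
     "y = (\<lambda>i. if i \<in> {1..N} then \<Sum>j = 1..d. c' j * M i j else 0)"
    unfolding colspan_def by auto
  then show "x + y \<in> colspan N d M"
    unfolding colspan_def
    by (intro CollectI exI[of _ "\<lambda>j. c j + c' j"]) (auto simp: fun_eq_iff sum.distrib algebra_simps)
next
  fix a x assume "x \<in> colspan N d M"
  then obtain c where "x = (\<lambda>i. if i \<in> {1..N} then \<Sum>j = 1..d. c j * M i j else 0)"
    unfolding colspan_def by auto
  then show "sc a x \<in> colspan N d M"
    unfolding colspan_def
    by (intro CollectI exI[of _ "\<lambda>j. a * c j"]) (auto simp: fun_eq_iff sc_def sum_distrib_left algebra_simps)
qed

lemma colspan_zero: "0 \<in> colspan N d M"
  using subspace_colspan unfolding V.subspace_def by blast

lemma colspan_add: "x \<in> colspan N d M \<Longrightarrow> y \<in> colspan N d M \<Longrightarrow> x + y \<in> colspan N d M"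
  using subspace_colspan unfolding V.subspace_def by blast

lemma colspan_diff: "x \<in> colspan N d M \<Longrightarrow> y \<in> colspan N d M \<Longrightarrow> x - y \<in> colspan N d M"
  using V.subspace_diff[OF subspace_colspan] by blast

lemma col_in_colspan:
  assumes "j \<in> {1..d}" shows "col N M j \<in> colspan N d M"
proof -
  have "(\<Sum>k=1..d. (if k = j then 1 else 0) * M i k) = M i j" for i
  proof -
    have "(\<Sum>k=1..d. (if k = j then 1 else 0) * M i k) = (\<Sum>k=1..d. if k = j then M i k else 0)"
      by (rule sum.cong) auto
    then show ?thesis using assms by simp
  qed
  then have "col N M j = (\<lambda>i. if i \<in> {1..N} then \<Sum>k=1..d. (if k = j then 1 else 0) * M i k else 0)"
    by (auto simp only: col_def)
  then show ?thesis unfolding colspan_def mem_Collect_eq by (rule exI[of _ "\<lambda>k. if k = j then 1 else 0"])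
qed

lemma colspan_span: "colspan N d M = V.span (col N M ` {1..d})"
proof
  show "V.span (col N M ` {1..d}) \<subseteq> colspan N d M"
    using col_in_colspan by (intro V.span_minimal[OF _ subspace_colspan]) blast
next
  show "colspan N d M \<subseteq> V.span (col N M ` {1..d})"
  proof
    fix v assume "v \<in> colspan N d M"
    then obtain c where c: "v = (\<lambda>i. if i \<in> {1..N} then \<Sum>j = 1..d. c j * M i j else 0)"
      unfolding colspan_def by auto
    have "v = (\<Sum>j\<in>{1..d}. sc (c j) (col N M j))"
      by (auto simp: c fun_eq_iff sum_sc_apply col_def)
    also have "\<dots> \<in> V.span (col N M ` {1..d})"
      by (intro V.span_sum V.span_scale V.span_base) auto
    finally show "v \<in> V.span (col N M ` {1..d})" .
  qed
qed

lemma frame_supp: "frame N d M \<Longrightarrow> M i j \<noteq> 0 \<Longrightarrow> i \<in> {1..N} \<and> j \<in> {1..d}"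
  unfolding frame_def by blast

lemma frame_indep:
  "frame N d M \<Longrightarrow> (\<forall>i. (\<Sum>j=1..d. c j * M i j) = 0) \<Longrightarrow> j \<in> {1..d} \<Longrightarrow> c j = 0"
  unfolding frame_def by blast

lemma frame_col_relation:
  assumes fr: "frame N d M" and rel: "(\<Sum>j\<in>{1..d}. sc (c j) (col N M j)) = 0" and j: "j \<in> {1..d}"
  shows "c j = 0"
proof (rule frame_indep[OF fr _ j], rule allI)
  fix i
  show "(\<Sum>j=1..d. c j * M i j) = 0"
  proof (cases "i \<in> {1..N}")
    case True
    then show ?thesis using fun_cong[OF rel, of i] by (simp add: sum_sc_apply col_def)
  next
    case False
    then have "M i j = 0" for j using frame_supp[OF fr] by blast
    then show ?thesis by simp
  qed
qed

lemma frame_inj_col: assumes "frame N d M" shows "inj_on (col N M) {1..d}"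
proof (rule inj_onI, rule ccontr)
  fix a b assume ab: "a \<in> {1..d}" "b \<in> {1..d}" "col N M a = col N M b" "a \<noteq> b"
  define c where "c j = (if j = a then 1 else if j = b then -1 else 0 :: complex)" for j
  have "(\<Sum>j\<in>{1..d}. sc (c j) (col N M j)) i = 0" for i
  proof -
    have "(\<Sum>j\<in>{1..d}. sc (c j) (col N M j)) i
        = (\<Sum>j\<in>{1..d}. (if j = a then col N M j i else 0) - (if j = b then col N M j i else 0))"
      unfolding sum_sc_apply using ab(4) by (intro sum.cong) (auto simp: c_def)
    also have "\<dots> = col N M a i - col N M b i"
      using ab by (simp add: sum_subtractf sum.delta)
    finally show ?thesis using ab(3) by simp
  qed
  then have "c a = 0" using frame_col_relation[OF assms _ ab(1)] by (simp add: fun_eq_iff)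
  then show False by (simp add: c_def)
qed

lemma frame_independent: assumes fr: "frame N d M" shows "V.independent (col N M ` {1..d})"
proof
  assume "V.dependent (col N M ` {1..d})"
  then obtain u where u: "\<exists>v\<in>col N M ` {1..d}. u v \<noteq> 0"
    "(\<Sum>v\<in>col N M ` {1..d}. sc (u v) v) = 0"
    using V.dependent_finite[of "col N M ` {1..d}"] by auto
  then have "(\<Sum>j\<in>{1..d}. sc (u (col N M j)) (col N M j)) = 0"
    using sum.reindex[OF frame_inj_col[OF fr], of "\<lambda>v. sc (u v) v"] by simp
  then have "u (col N M j) = 0" if "j \<in> {1..d}" for j
    using frame_col_relation[OF fr, of "\<lambda>j. u (col N M j)"] that by blast
  then show False using u(1) by auto
qed

lemma frame_card_cols: "frame N d M \<Longrightarrow> card (col N M ` {1..d}) = d"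
  using card_image[OF frame_inj_col] by simp

lemma frame_of_basis:
  assumes fin: "finite B" and cB: "card B = r" and ind: "V.independent B" and sp: "\<forall>b\<in>B. supp n b"
  obtains H where "frame n r H" "colspan n r H = V.span B" "\<forall>t\<in>{1..r}. col n H t \<in> B"
proof -
  obtain f where f: "bij_betw f {1..r} B" using ex_bij_betw_nat_finite_1[OF fin] cB by auto
  have f_supp: "supp n (f t)" if "t \<in> {1..r}" for t
    using sp f that by (auto simp: bij_betw_def)
  define H where "H = (\<lambda>i t. if t \<in> {1..r} then f t i else 0)"
  have colH: "col n H t = f t" if "t \<in> {1..r}" for t
    using f_supp[OF that] that by (auto simp: col_def H_def fun_eq_iff supp_def)
  have fr: "frame n r H"
    unfolding frame_def
  proof (rule conjI; intro allI impI)
    fix i j assume "H i j \<noteq> 0"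
    then have "j \<in> {1..r}" "f j i \<noteq> 0" by (auto simp: H_def split: if_splits)
    then show "i \<in> {1..n} \<and> j \<in> {1..r}" using f_supp by (auto simp: supp_def)
  next
    fix c :: "nat \<Rightarrow> complex" assume c: "\<forall>i. (\<Sum>j = 1..r. c j * H i j) = 0"
    define u where "u = (\<lambda>b. c (inv_into {1..r} f b))"
    have "(\<Sum>b\<in>B. sc (u b) b) = (\<Sum>t\<in>{1..r}. sc (u (f t)) (f t))"
      using sum.reindex_bij_betw[OF f, of "\<lambda>b. sc (u b) b"] by simp
    also have "\<dots> = (\<Sum>t\<in>{1..r}. sc (c t) (f t))"
      using f by (intro sum.cong) (auto simp: u_def bij_betw_def inv_into_f_f)
    also have "\<dots> = 0"
    proof
      fix i
      have "(\<Sum>t\<in>{1..r}. sc (c t) (f t)) i = (\<Sum>j = 1..r. c j * H i j)"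
        by (auto simp: sum_sc_apply H_def intro!: sum.cong)
      then show "(\<Sum>t\<in>{1..r}. sc (c t) (f t)) i = 0 i" using c by simp
    qed
    finally have "\<forall>b\<in>B. u b = 0" using ind V.dependent_finite[OF fin] by blast
    then show "\<forall>j\<in>{1..r}. c j = 0"
      using f by (auto simp: u_def bij_betw_def inv_into_f_f)
  qed
  have "col n H ` {1..r} = B"
    using colH f by (simp add: bij_betw_def)
  then have "colspan n r H = V.span B"
    by (simp only: colspan_span)
  moreover have "\<forall>t\<in>{1..r}. col n H t \<in> B"
    using \<open>col n H ` {1..r} = B\<close> by blast
  ultimately show ?thesis using that fr by blast
qed

lemma span_eq_if_independent_card_ge:
  assumes fT: "finite T" and fS: "finite S" and iS: "V.independent S" and sub: "S \<subseteq> V.span T"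
    and cT: "card T \<le> card S"
  shows "V.span S = V.span T"
proof
  show "V.span S \<subseteq> V.span T" using sub V.span_minimal V.subspace_span by blast
  have "t \<in> V.span S" if t: "t \<in> T" for t
  proof (rule ccontr)
    assume nt: "t \<notin> V.span S"
    then have "V.independent (insert t S)" "insert t S \<subseteq> V.span T"
      using V.independent_insertI[OF nt iS] sub t V.span_base by blast+
    then have "card (insert t S) \<le> card T" using V.independent_span_bound[OF fT] by blast
    moreover have "t \<notin> S" using nt V.span_base by blast
    ultimately show False using cT fS by simp
  qed
  then show "V.span T \<subseteq> V.span S" using V.span_minimal V.subspace_span by blast
qed

lemma colspan_eq_if_subset:
  assumes "frame n r H" "frame n r G" "colspan n r H \<subseteq> colspan n r G"
  shows "colspan n r H = colspan n r G"
proof -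
  have "col n H ` {1..r} \<subseteq> V.span (col n G ` {1..r})"
    using assms(3) V.span_superset unfolding colspan_span by blast
  then show ?thesis unfolding colspan_span
    using span_eq_if_independent_card_ge[of "col n G ` {1..r}" "col n H ` {1..r}"]
      frame_independent[OF assms(1)] frame_card_cols[OF assms(1)] frame_card_cols[OF assms(2)]
    by simp
qed

lemma colspan_eq_if_cols_in:
  assumes "frame n r H" "frame n r G" "\<forall>t\<in>{1..r}. col n H t \<in> colspan n r G"
  shows "colspan n r H = colspan n r G"
proof (rule colspan_eq_if_subset[OF assms(1,2)])
  show "colspan n r H \<subseteq> colspan n r G"
    unfolding colspan_span[of n r H] using assms(3) by (intro V.span_minimal[OF _ subspace_colspan]) blast
qed

section \<open>Limits of frames\<close>

lemma bounded_convergent_subseq_finite: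
  fixes c :: "nat \<Rightarrow> nat \<Rightarrow> complex"
  assumes "finite J" "\<forall>k. \<forall>j\<in>J. norm (c k j) \<le> Bd"
  shows "\<exists>\<sigma> l. strict_mono \<sigma> \<and> (\<forall>j\<in>J. (\<lambda>k. c (\<sigma> k) j) \<longlonglongrightarrow> l j)"
  using assms
proof (induction J rule: finite_induct)
  case empty
  show ?case by (rule exI[of _ id]) (auto simp: strict_mono_def)
next
  case (insert j J)
  then obtain \<sigma> l where s: "strict_mono \<sigma>" "\<forall>j\<in>J. (\<lambda>k. c (\<sigma> k) j) \<longlonglongrightarrow> l j" by auto
  have "bounded (range (\<lambda>k. c (\<sigma> k) j))"
    unfolding bounded_iff using insert.prems by auto
  then obtain l' \<tau> where t: "strict_mono \<tau>" "((\<lambda>k. c (\<sigma> k) j) \<circ> \<tau>) \<longlonglongrightarrow> l'"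
    using bounded_imp_convergent_subsequence by blast
  have "(\<lambda>k. c ((\<sigma> \<circ> \<tau>) k) j') \<longlonglongrightarrow> (l(j := l')) j'" if "j' \<in> insert j J" for j'
  proof (cases "j' = j")
    case True then show ?thesis using t(2) by (simp add: comp_def)
  next
    case False then show ?thesis
      using that LIMSEQ_subseq_LIMSEQ[OF s(2)[rule_format] t(1)] by (simp add: comp_def)
  qed
  moreover have "strict_mono (\<sigma> \<circ> \<tau>)" using s t strict_mono_o by blast
  ultimately show ?case by blast
qed

text \<open>Rescaling each coefficient vector so that the norms of its entries sum to 1 makes the sequence
  bounded, so that Bolzano--Weierstrass applies, and keeps the limit away from 0.\<close>

lemma rescaled_convergent_subseq:
  fixes c :: "nat \<Rightarrow> nat \<Rightarrow> complex"
  assumes J: "finite J" and nz: "\<And>k. \<exists>j\<in>J. c k j \<noteq> 0"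
  obtains \<sigma> t l where "strict_mono \<sigma>" "\<And>j. j \<in> J \<Longrightarrow> (\<lambda>k. t k * c (\<sigma> k) j) \<longlonglongrightarrow> l j"
    "\<exists>j\<in>J. l j \<noteq> 0"
proof -
  define s where "s k = (\<Sum>j\<in>J. norm (c k j))" for k
  have norm_le: "norm (c k j) \<le> s k" if "j \<in> J" for k j
    unfolding s_def using J that by (intro member_le_sum) auto
  have spos: "s k > 0" for k
  proof -
    obtain j where "j \<in> J" "c k j \<noteq> 0" using nz by blast
    then have "0 < norm (c k j)" "norm (c k j) \<le> s k" using norm_le by auto
    then show ?thesis by linarith
  qed
  define a where "a k j = c k j / complex_of_real (s k)" for k j
  have "\<forall>k. \<forall>j\<in>J. norm (a k j) \<le> 1"
  proof (intro allI ballI)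
    fix k j assume "j \<in> J"
    then show "norm (a k j) \<le> 1"
      using norm_le[of j k] spos[of k] by (simp add: a_def norm_divide divide_le_eq_1)
  qed
  then obtain \<sigma> l where \<sigma>: "strict_mono \<sigma>" and l: "\<forall>j\<in>J. (\<lambda>k. a (\<sigma> k) j) \<longlonglongrightarrow> l j"
    using bounded_convergent_subseq_finite[OF J] by blast
  have "(\<Sum>j\<in>J. norm (a k j)) = 1" for k
  proof -
    have "(\<Sum>j\<in>J. norm (a k j)) = (\<Sum>j\<in>J. norm (c k j) / s k)"
      using spos[of k] by (simp add: a_def norm_divide)
    also have "\<dots> = 1"
      using spos[of k] by (simp add: s_def sum_divide_distrib[symmetric])
    finally show ?thesis .
  qed
  then have "(\<lambda>k. \<Sum>j\<in>J. norm (a (\<sigma> k) j)) \<longlonglongrightarrow> 1" by simp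
  moreover have "(\<lambda>k. \<Sum>j\<in>J. norm (a (\<sigma> k) j)) \<longlonglongrightarrow> (\<Sum>j\<in>J. norm (l j))"
    using l by (intro tendsto_intros) auto
  ultimately have "(\<Sum>j\<in>J. norm (l j)) = 1" using LIMSEQ_unique by blast
  then have "\<exists>j\<in>J. l j \<noteq> 0"
    by (cases "\<forall>j\<in>J. l j = 0") auto
  moreover have "(\<lambda>k. (1 / complex_of_real (s (\<sigma> k))) * c (\<sigma> k) j) \<longlonglongrightarrow> l j" if "j \<in> J" for j
    using l that by (simp add: a_def)
  ultimately show ?thesis
    using that[OF \<sigma>, of "\<lambda>k. 1 / complex_of_real (s (\<sigma> k))"] by blast
qed

lemma limit_of_sum_relation:
  fixes X :: "nat \<Rightarrow> nat \<Rightarrow> complex"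
  assumes "finite J" "strict_mono \<sigma>" "\<And>j. j \<in> J \<Longrightarrow> (\<lambda>k. t k * c (\<sigma> k) j) \<longlonglongrightarrow> l j"
    and "\<And>j. j \<in> J \<Longrightarrow> (\<lambda>k. X k j) \<longlonglongrightarrow> Y j" and "\<And>k. (\<Sum>j\<in>J. c k j * X k j) = 0"
  shows "(\<Sum>j\<in>J. l j * Y j) = 0"
proof -
  have "(\<lambda>k. \<Sum>j\<in>J. (t k * c (\<sigma> k) j) * X (\<sigma> k) j) \<longlonglongrightarrow> (\<Sum>j\<in>J. l j * Y j)"
    using assms(3) LIMSEQ_subseq_LIMSEQ[OF assms(4) assms(2)] by (intro tendsto_intros) (auto simp: comp_def)
  moreover have "(\<Sum>j\<in>J. (t k * c (\<sigma> k) j) * X (\<sigma> k) j) = 0" for k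
    using assms(5)[of "\<sigma> k"] by (simp add: mult.assoc sum_distrib_left[symmetric])
  ultimately show ?thesis by (simp add: LIMSEQ_const_iff)
qed

lemma colspan_of_relation:
  assumes fr: "frame N d M" and x: "supp N x" and nz: "\<exists>j\<in>{0..d}. l j \<noteq> 0"
    and rel: "\<And>i. i \<in> {1..N} \<Longrightarrow> l 0 * x i = (\<Sum>j=1..d. l j * M i j)"
  shows "x \<in> colspan N d M"
proof -
  have "l 0 \<noteq> 0"
  proof
    assume l0: "l 0 = 0"
    have "(\<Sum>j=1..d. l j * M i j) = 0" for i
    proof (cases "i \<in> {1..N}")
      case True then show ?thesis using rel[OF True] l0 by simp
    next
      case False
      then have "M i j = 0" for j using frame_supp[OF fr] by blast
      then show ?thesis by simp
    qed
    then have "\<forall>j\<in>{1..d}. l j = 0" using frame_indep[OF fr] by blast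
    moreover obtain j where "j \<in> {0..d}" "l j \<noteq> 0" using nz by blast
    ultimately show False using l0 by (cases "j = 0") auto
  qed
  have "x i = (if i \<in> {1..N} then (\<Sum>j=1..d. (l j / l 0) * M i j) else 0)" for i
  proof (cases "i \<in> {1..N}")
    case True
    have "x i = (l 0 * x i) / l 0" using \<open>l 0 \<noteq> 0\<close> by simp
    also have "\<dots> = (\<Sum>j=1..d. l j * M i j) / l 0" by (simp only: rel[OF True])
    also have "\<dots> = (\<Sum>j=1..d. (l j / l 0) * M i j)" by (simp add: sum_divide_distrib)
    finally show ?thesis using True by simp
  next
    case False
    then show ?thesis using x by (auto simp: supp_def)
  qed
  then show ?thesis unfolding colspan_def mem_Collect_eq by (intro exI[of _ "\<lambda>j. l j / l 0"]) (simp add: fun_eq_iff)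
qed

lemma colspan_limit:
  assumes fr: "frame N d M" and FM: "\<forall>i j. (\<lambda>k. F k i j) \<longlonglongrightarrow> M i j"
    and vF: "\<forall>k. v k \<in> colspan N d (F k)" and vx: "\<forall>i. (\<lambda>k. v k i) \<longlonglongrightarrow> x i"
  shows "x \<in> colspan N d M"
proof -
  from vF obtain c where c: "\<forall>k. v k = (\<lambda>i. if i \<in> {1..N} then (\<Sum>j=1..d. c k j * F k i j) else 0)"
    unfolding colspan_def by (auto simp: choice_iff)
  text \<open>The relation \<open>v k = \<Sum>j. c k j \<cdot> col (F k) j\<close> is homogeneous in \<open>(1, c k)\<close>, index 0
    carrying \<open>- v k\<close>.\<close>
  define c' where "c' k j = (if j = 0 then 1 else c k j)" for k j
  define X where "X k i j = (if j = 0 then - v k i else F k i j)" for k i j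
  define Y where "Y i j = (if j = 0 then - x i else M i j)" for i j
  obtain \<sigma> t l where \<sigma>: "strict_mono \<sigma>" and l: "\<And>j. j \<in> {0..d} \<Longrightarrow> (\<lambda>k. t k * c' (\<sigma> k) j) \<longlonglongrightarrow> l j"
    and l_nz: "\<exists>j\<in>{0..d}. l j \<noteq> 0"
    by (rule rescaled_convergent_subseq[of "{0..d}" c']) (auto simp: c'_def)
  have split0: "{0..d} = insert 0 {1..d}" by auto
  have "l 0 * x i = (\<Sum>j=1..d. l j * M i j)" if i: "i \<in> {1..N}" for i
  proof -
    have "(\<Sum>j\<in>{0..d}. c' k j * X k i j) = 0" for k
    proof -
      have "(\<Sum>j\<in>{1..d}. c' k j * X k i j) = (\<Sum>j=1..d. c k j * F k i j)"
        by (rule sum.cong) (auto simp: c'_def X_def)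
      then show ?thesis using c i by (simp add: split0 c'_def X_def)
    qed
    then have "(\<Sum>j\<in>{0..d}. l j * Y i j) = 0"
      using FM vx by (intro limit_of_sum_relation[OF _ \<sigma> l, where X = "\<lambda>k. X k i"])
        (auto simp: X_def Y_def intro: tendsto_minus)
    moreover have "(\<Sum>j\<in>{1..d}. l j * Y i j) = (\<Sum>j=1..d. l j * M i j)"
      by (rule sum.cong) (auto simp: Y_def)
    ultimately have "- (l 0 * x i) + (\<Sum>j=1..d. l j * M i j) = 0" by (simp add: split0 Y_def)
    then show ?thesis by algebra
  qed
  moreover have "supp N x"
    unfolding supp_def
  proof (intro allI impI, rule ccontr)
    fix i assume "x i \<noteq> 0" "i \<notin> {1..N}"
    then have "(\<lambda>k. v k i) = (\<lambda>k. 0)" using c by auto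
    then show False using vx \<open>x i \<noteq> 0\<close> by (metis LIMSEQ_const_iff)
  qed
  ultimately show ?thesis using colspan_of_relation[OF fr _ l_nz] by blast
qed

lemma not_frame_limit:
  assumes supG: "\<forall>k i j. G k i j \<noteq> 0 \<longrightarrow> i \<in> {1..n} \<and> j \<in> {1..r}"
    and nf: "\<forall>k. \<not> frame n r (G k)"
    and lim: "\<forall>i j. (\<lambda>k. G k i j) \<longlonglongrightarrow> H i j"
  shows "\<not> frame n r H"
proof
  assume fr: "frame n r H"
  have "\<forall>k. \<exists>c. (\<forall>i. (\<Sum>j=1..r. c j * G k i j) = 0) \<and> (\<exists>j\<in>{1..r}. c j \<noteq> 0)"
    using nf supG unfolding frame_def by blast
  then obtain c where c: "\<And>k i. (\<Sum>j=1..r. c k j * G k i j) = 0" "\<And>k. \<exists>j\<in>{1..r}. c k j \<noteq> 0"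
    by metis
  obtain \<sigma> t l where \<sigma>: "strict_mono \<sigma>" and l: "\<And>j. j \<in> {1..r} \<Longrightarrow> (\<lambda>k. t k * c (\<sigma> k) j) \<longlonglongrightarrow> l j"
    and l_nz: "\<exists>j\<in>{1..r}. l j \<noteq> 0"
    using rescaled_convergent_subseq[of "{1..r}" c] c(2) by blast
  have "\<forall>i. (\<Sum>j=1..r. l j * H i j) = 0"
    using lim c(1) by (intro allI limit_of_sum_relation[OF _ \<sigma> l, where X = "\<lambda>k. G k _"]) auto
  then show False using frame_indep[OF fr] l_nz by blast
qed

lemma eventually_frame:
  assumes fr: "frame n r H"
    and supG: "\<forall>k i j. G k i j \<noteq> 0 \<longrightarrow> i \<in> {1..n} \<and> j \<in> {1..r}"
    and lim: "\<forall>i j. (\<lambda>k. G k i j) \<longlonglongrightarrow> H i j"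
  shows "\<exists>K. \<forall>k\<ge>K. frame n r (G k)"
proof (rule ccontr)
  assume "\<nexists>K. \<forall>k\<ge>K. frame n r (G k)"
  then have "infinite {k. \<not> frame n r (G k)}"
    unfolding infinite_nat_iff_unbounded_le mem_Collect_eq by (meson not_le_imp_less less_imp_le)
  then obtain \<sigma> :: "nat \<Rightarrow> nat" where \<sigma>: "strict_mono \<sigma>" "\<forall>k. \<not> frame n r (G (\<sigma> k))"
    using infinite_enumerate by blast
  have "\<not> frame n r H"
    using supG \<sigma>(2) LIMSEQ_subseq_LIMSEQ[OF lim[rule_format] \<sigma>(1)]
    by (intro not_frame_limit[of "\<lambda>k. G (\<sigma> k)"]) (auto simp: comp_def)
  then show False using fr by blast
qed

section \<open>Extending a plane by the first coordinate vectors\<close>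

definition shift :: "nat \<Rightarrow> cvector \<Rightarrow> cvector" where
  "shift p u = (\<lambda>i. if p < i then u (i - p) else 0)"

definition unshift :: "nat \<Rightarrow> nat \<Rightarrow> cvector \<Rightarrow> cvector" where
  "unshift p n v = (\<lambda>i. if i \<in> {1..n} then v (i + p) else 0)"

text \<open>The plane \<open>E\<^sub>p \<oplus> U\<close>, where \<open>E\<^sub>p\<close> is spanned by \<open>e\<^sub>1, \<dots>, e\<^sub>p\<close> and \<open>U\<close> is moved to the coordinates
  \<open>p+1, p+2, \<dots>\<close>; on Schubert varieties it realises the reduction \<open>X(w\<^sub>r\<^sub>e\<^sub>d) \<cong> X(w)\<close>.\<close>

definition extend_plane :: "nat \<Rightarrow> cvector set \<Rightarrow> cvector set" where
  "extend_plane p U = {e + shift p u | e u. supp p e \<and> u \<in> U}"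

definition extend_frame :: "nat \<Rightarrow> nat \<Rightarrow> nat \<Rightarrow> cmatrix \<Rightarrow> cmatrix" where
  "extend_frame p n d H = (\<lambda>i j. if j \<in> {1..p} then (if i = j then 1 else 0)
      else if j \<in> {p+1..d} \<and> i \<in> {p+1..p+n} then H (i-p) (j-p) else 0)"

definition unit_vec :: "nat \<Rightarrow> cvector" where
  "unit_vec i = (\<lambda>k. if k = i then 1 else 0)"

lemma shift_0 [simp]: "shift p 0 = 0"
  by (simp add: shift_def fun_eq_iff)

lemma shift_add: "shift p (x + y) = shift p x + shift p y"
  by (auto simp: shift_def fun_eq_iff)

lemma shift_sc: "shift p (sc c x) = sc c (shift p x)"
  by (auto simp: shift_def fun_eq_iff sc_def)

lemma shift_sum: "shift p (\<Sum>v\<in>A. f v) = (\<Sum>v\<in>A. shift p (f v))"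
  by (auto simp: shift_def fun_eq_iff sum_fun_apply)

lemma shift_inj: "supp n x \<Longrightarrow> supp n y \<Longrightarrow> shift p x = shift p y \<Longrightarrow> x = y"
proof
  fix i assume xy: "supp n x" "supp n y" "shift p x = shift p y"
  show "x i = y i"
  proof (cases "i = 0")
    case True
    have "x 0 = 0" "y 0 = 0" using xy(1,2) unfolding supp_def by fastforce+
    then show ?thesis using True by simp
  next
    case False
    then show ?thesis using fun_cong[OF xy(3), of "i+p"] by (simp add: shift_def)
  qed
qed

lemma unshift_add: "unshift p n (a + b) = unshift p n a + unshift p n b"
  by (auto simp: unshift_def fun_eq_iff)

lemma unshift_supp: "supp p e \<Longrightarrow> unshift p n e = 0"
  by (auto simp: unshift_def supp_def fun_eq_iff)

lemma unshift_shift: "supp n u \<Longrightarrow> unshift p n (shift p u) = u"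
  by (auto simp: unshift_def shift_def supp_def fun_eq_iff)

lemma shift_unshift:
  "supp (p+n) v \<Longrightarrow> shift p (unshift p n v) = v - (\<lambda>i. if i \<le> p then v i else 0)"
  by (auto simp: shift_def unshift_def supp_def fun_eq_iff)

lemma supp_truncate: "supp m v \<Longrightarrow> supp p (\<lambda>i. if i \<le> p then v i else 0)"
  by (auto simp: supp_def)

lemma supp_extend_plane: assumes "supp p e" "supp n u" shows "supp (p+n) (e + shift p u)"
  unfolding supp_def
proof (intro allI impI)
  fix i assume i: "(e + shift p u) i \<noteq> 0"
  show "i \<in> {1..p+n}"
  proof (cases "e i = 0")
    case False then show ?thesis using assms(1) by (auto simp: supp_def)
  next
    case True
    then have "p < i" "u (i - p) \<noteq> 0" using i by (auto simp: shift_def split: if_splits)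
    then show ?thesis using assms(2) by (auto simp: supp_def)
  qed
qed

lemma unshift_extend_plane: "\<forall>u\<in>U. supp n u \<Longrightarrow> unshift p n ` extend_plane p U = U"
proof
  assume U: "\<forall>u\<in>U. supp n u"
  show "unshift p n ` extend_plane p U \<subseteq> U"
    using U by (auto simp: extend_plane_def unshift_add unshift_supp unshift_shift)
  show "U \<subseteq> unshift p n ` extend_plane p U"
  proof
    fix u assume "u \<in> U"
    then have "0 + shift p u \<in> extend_plane p U" unfolding extend_plane_def using supp_0 by blast
    moreover have "unshift p n (0 + shift p u) = u" using U \<open>u \<in> U\<close> by (simp add: unshift_shift)
    ultimately show "u \<in> unshift p n ` extend_plane p U" by force
  qed
qed

lemma inj_on_extend_plane: "inj_on (extend_plane p) {U. \<forall>u\<in>U. supp n u}"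
  by (rule inj_on_inverseI[of _ "(`) (unshift p n)"]) (simp add: unshift_extend_plane)

lemma extend_plane_unshift:
  assumes E: "\<forall>e. supp p e \<longrightarrow> e \<in> colspan N d M"
    and S: "\<forall>v\<in>colspan N d M. supp (p+n) v"
  shows "extend_plane p (unshift p n ` colspan N d M) = colspan N d M"
proof
  show "extend_plane p (unshift p n ` colspan N d M) \<subseteq> colspan N d M"
  proof
    fix x assume "x \<in> extend_plane p (unshift p n ` colspan N d M)"
    then obtain e v where x: "x = e + shift p (unshift p n v)" "supp p e" "v \<in> colspan N d M"
      unfolding extend_plane_def by auto
    have "(\<lambda>i. if i \<le> p then v i else 0) \<in> colspan N d M"
      using E supp_truncate S x(3) by blast
    then have "v - (\<lambda>i. if i \<le> p then v i else 0) \<in> colspan N d M"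
      using colspan_diff x(3) by blast
    then have "shift p (unshift p n v) \<in> colspan N d M"
      by (simp only: shift_unshift[OF S[rule_format, OF x(3)]])
    moreover have "e \<in> colspan N d M" using E x(2) by blast
    ultimately show "x \<in> colspan N d M" unfolding x(1) by (rule colspan_add[rotated])
  qed
  show "colspan N d M \<subseteq> extend_plane p (unshift p n ` colspan N d M)"
  proof
    fix v assume v: "v \<in> colspan N d M"
    have "v = (\<lambda>i. if i \<le> p then v i else 0) + shift p (unshift p n v)"
      using shift_unshift[OF S[rule_format, OF v]] by (simp add: fun_eq_iff)
    then show "v \<in> extend_plane p (unshift p n ` colspan N d M)"
      unfolding extend_plane_def using supp_truncate[OF colspan_supp[OF v]] v by blast
  qed
qed

lemma extend_plane_supp:
  assumes "colspan N d F = extend_plane p U" "\<forall>u\<in>U. supp n u"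
  shows "\<forall>v\<in>colspan N d F. supp (p+n) v"
proof
  fix v assume "v \<in> colspan N d F"
  then obtain e u where "v = e + shift p u" "supp p e" "u \<in> U"
    unfolding assms(1) extend_plane_def by blast
  then show "supp (p+n) v" using assms(2) supp_extend_plane by blast
qed

lemma extend_plane_contains:
  assumes eq: "colspan N d F = extend_plane p U"
  shows "\<forall>e. supp p e \<longrightarrow> e \<in> colspan N d F"
proof (intro allI impI)
  fix e assume e: "supp p e"
  obtain e' u where "0 = e' + shift p u" "supp p e'" "u \<in> U"
    using colspan_zero[of N d F] unfolding eq extend_plane_def by blast
  then have "e + shift p u \<in> colspan N d F" "0 + shift p u \<in> colspan N d F"
    using e supp_0 unfolding eq extend_plane_def by blast+
  from colspan_diff[OF this] show "e \<in> colspan N d F" by simp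
qed

lemma extend_frame_comb:
  assumes pd: "p \<le> d" and pnN: "p + n \<le> N"
  shows "(\<lambda>i. if i \<in> {1..N} then \<Sum>j=1..d. c j * extend_frame p n d H i j else 0)
    = (\<lambda>i. if i \<in> {1..p} then c i else 0)
      + shift p (\<lambda>r. if r \<in> {1..n} then \<Sum>j=1..d-p. c (j+p) * H r j else 0)"
proof
  fix i
  have split: "{1..d} = {1..p} \<union> {p+1..d}" using pd by auto
  have low: "(\<Sum>j\<in>{1..p}. c j * extend_frame p n d H i j) = (if i \<in> {1..p} then c i else 0)"
  proof -
    have "(\<Sum>j\<in>{1..p}. c j * extend_frame p n d H i j) = (\<Sum>j\<in>{1..p}. if i = j then c j else 0)"
      by (intro sum.cong) (auto simp: extend_frame_def)
    then show ?thesis by (simp add: sum.delta)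
  qed
  have high: "(\<Sum>j\<in>{p+1..d}. c j * extend_frame p n d H i j)
      = (if i \<in> {p+1..p+n} then (\<Sum>j=1..d-p. c (j+p) * H (i-p) j) else 0)"
  proof (cases "i \<in> {p+1..p+n}")
    case True
    have "(\<Sum>j\<in>{p+1..d}. c j * extend_frame p n d H i j) = (\<Sum>j\<in>{1+p..(d-p)+p}. c j * H (i-p) (j-p))"
      using True pd by (intro sum.cong) (auto simp: extend_frame_def)
    also have "\<dots> = (\<Sum>j=1..d-p. c (j+p) * H (i-p) j)"
      by (subst sum.shift_bounds_cl_nat_ivl) simp
    finally show ?thesis using True by simp
  next
    case False
    then show ?thesis by (auto simp: extend_frame_def intro!: sum.neutral)
  qed
  have "(\<Sum>j=1..d. c j * extend_frame p n d H i j)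
      = (\<Sum>j\<in>{1..p}. c j * extend_frame p n d H i j) + (\<Sum>j\<in>{p+1..d}. c j * extend_frame p n d H i j)"
    unfolding split by (rule sum.union_disjoint) auto
  then show "(if i \<in> {1..N} then \<Sum>j=1..d. c j * extend_frame p n d H i j else 0) =
    ((\<lambda>i. if i \<in> {1..p} then c i else 0)
      + shift p (\<lambda>r. if r \<in> {1..n} then \<Sum>j=1..d-p. c (j+p) * H r j else 0)) i"
    using low high pnN by (auto simp: shift_def)
qed

lemma colspan_extend_frame:
  assumes pd: "p \<le> d" and pnN: "p + n \<le> N"
  shows "colspan N d (extend_frame p n d H) = extend_plane p (colspan n (d-p) H)"
proof
  show "colspan N d (extend_frame p n d H) \<subseteq> extend_plane p (colspan n (d-p) H)"
  proof
    fix x assume "x \<in> colspan N d (extend_frame p n d H)"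
    then obtain c where x: "x = (\<lambda>i. if i \<in> {1..N} then \<Sum>j=1..d. c j * extend_frame p n d H i j else 0)"
      unfolding colspan_def by blast
    have "supp p (\<lambda>i. if i \<in> {1..p} then c i else 0)" by (auto simp: supp_def)
    moreover have "(\<lambda>r. if r \<in> {1..n} then \<Sum>j=1..d-p. c (j+p) * H r j else 0) \<in> colspan n (d-p) H"
      unfolding colspan_def mem_Collect_eq by (rule exI[of _ "\<lambda>j. c (j+p)"]) (rule refl)
    ultimately show "x \<in> extend_plane p (colspan n (d-p) H)"
      unfolding x extend_frame_comb[OF pd pnN] extend_plane_def by blast
  qed
  show "extend_plane p (colspan n (d-p) H) \<subseteq> colspan N d (extend_frame p n d H)"
  proof
    fix x assume "x \<in> extend_plane p (colspan n (d-p) H)"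
    then obtain e c' where x: "x = e + shift p (\<lambda>r. if r \<in> {1..n} then \<Sum>j=1..d-p. c' j * H r j else 0)"
      and e: "supp p e"
      unfolding extend_plane_def colspan_def by blast
    define c where "c j = (if j \<le> p then e j else c' (j - p))" for j
    have "e = (\<lambda>i. if i \<in> {1..p} then c i else 0)"
      using e by (auto simp: c_def supp_def fun_eq_iff)
    moreover have "(\<lambda>r. if r \<in> {1..n} then \<Sum>j=1..d-p. c' j * H r j else 0)
        = (\<lambda>r. if r \<in> {1..n} then \<Sum>j=1..d-p. c (j+p) * H r j else 0)"
      by (auto simp: c_def fun_eq_iff intro!: sum.cong)
    ultimately have "x = (\<lambda>i. if i \<in> {1..N} then \<Sum>j=1..d. c j * extend_frame p n d H i j else 0)"
      unfolding extend_frame_comb[OF pd pnN] x by simp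
    then show "x \<in> colspan N d (extend_frame p n d H)"
      unfolding colspan_def mem_Collect_eq by (rule exI[of _ c])
  qed
qed

lemma frame_extend_frame:
  assumes pd: "p \<le> d" and pnN: "p + n \<le> N" and fr: "frame n (d-p) H"
  shows "frame N d (extend_frame p n d H)"
  unfolding frame_def
proof (rule conjI; intro allI impI)
  fix i j assume "extend_frame p n d H i j \<noteq> 0"
  then show "i \<in> {1..N} \<and> j \<in> {1..d}" using pd pnN
    by (auto simp: extend_frame_def split: if_splits)
next
  fix c :: "nat \<Rightarrow> complex" assume c: "\<forall>i. (\<Sum>j=1..d. c j * extend_frame p n d H i j) = 0"
  have z: "(\<lambda>i. if i \<in> {1..p} then c i else 0)
      + shift p (\<lambda>r. if r \<in> {1..n} then \<Sum>j=1..d-p. c (j+p) * H r j else 0) = 0"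
    unfolding extend_frame_comb[OF pd pnN, symmetric] using c by (simp add: fun_eq_iff)
  have low: "c j = 0" if "j \<in> {1..p}" for j
    using fun_cong[OF z, of j] that by (auto simp: shift_def)
  have "(\<Sum>j=1..d-p. c (j+p) * H r j) = 0" for r
  proof (cases "r \<in> {1..n}")
    case True
    then show ?thesis using fun_cong[OF z, of "r+p"] by (auto simp: shift_def)
  next
    case False
    then have "\<And>j. H r j = 0" using frame_supp[OF fr] by metis
    then show ?thesis by simp
  qed
  then have high: "c (j+p) = 0" if "j \<in> {1..d-p}" for j
    using frame_indep[OF fr, where c = "\<lambda>j. c (j+p)"] that by blast
  show "\<forall>j\<in>{1..d}. c j = 0"
  proof
    fix j assume j: "j \<in> {1..d}"
    show "c j = 0"
    proof (cases "j \<le> p")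
      case True then show ?thesis using low j by auto
    next
      case False
      then have "c (j - p + p) = 0" using j by (intro high) auto
      then show ?thesis using False by simp
    qed
  qed
qed

lemma independent_Un_supp:
  assumes fS: "finite S" and fT: "finite T" and iS: "V.independent S" and iT: "V.independent T"
    and sS: "\<forall>s\<in>S. supp p s" and zT: "\<forall>t\<in>T. \<forall>i\<le>p. t i = 0"
  shows "V.independent (S \<union> T)"
proof
  assume "V.dependent (S \<union> T)"
  then obtain u v0 where u: "v0 \<in> S \<union> T" "u v0 \<noteq> 0" "(\<Sum>v\<in>S \<union> T. sc (u v) v) = 0"
    using V.dependent_finite[of "S \<union> T"] fS fT by auto
  have disj: "S \<inter> T = {}"
  proof (rule ccontr)
    assume "S \<inter> T \<noteq> {}"
    then obtain x where x: "x \<in> S" "x \<in> T" by auto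
    have "x = 0"
    proof
      fix i show "x i = 0 i"
        using sS x zT by (cases "i \<le> p") (auto simp: supp_def)
    qed
    then show False using x iS V.dependent_zero by blast
  qed
  define a where "a = (\<Sum>v\<in>S. sc (u v) v)"
  define b where "b = (\<Sum>v\<in>T. sc (u v) v)"
  have ab: "a + b = 0" using u(3) unfolding a_def b_def
    by (simp add: sum.union_disjoint[OF fS fT disj])
  have "a = 0"
  proof
    fix i show "a i = 0 i"
    proof (cases "i \<le> p")
      case True
      have "b i = 0"
        unfolding b_def sum_sc_apply using zT True by (auto intro!: sum.neutral)
      then show ?thesis using fun_cong[OF ab, of i] by simp
    next
      case False
      then show ?thesis unfolding a_def sum_sc_apply using sS by (auto simp: supp_def intro!: sum.neutral)
    qed
  qed
  then have "b = 0" using ab by simp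
  have "\<forall>v\<in>S. u v = 0" using \<open>a = 0\<close> iS V.dependent_finite[OF fS] unfolding a_def by blast
  moreover have "\<forall>v\<in>T. u v = 0" using \<open>b = 0\<close> iT V.dependent_finite[OF fT] unfolding b_def by blast
  ultimately show False using u(1,2) by blast
qed

lemma independent_shift:
  assumes fB: "finite B" and iB: "V.independent B" and sB: "\<forall>b\<in>B. supp n b"
  shows "V.independent (shift p ` B)" and "inj_on (shift p) B"
proof -
  show inj: "inj_on (shift p) B" using sB shift_inj by (meson inj_onI)
  show "V.independent (shift p ` B)"
  proof
    assume "V.dependent (shift p ` B)"
    then obtain u where u: "\<exists>v\<in>shift p ` B. u v \<noteq> 0" "(\<Sum>v\<in>shift p ` B. sc (u v) v) = 0"
      using V.dependent_finite[of "shift p ` B"] fB by auto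
    define s where "s = (\<Sum>b\<in>B. sc (u (shift p b)) b)"
    have "(\<Sum>v\<in>shift p ` B. sc (u v) v) = (\<Sum>b\<in>B. sc (u (shift p b)) (shift p b))"
      using sum.reindex[OF inj, of "\<lambda>v. sc (u v) v"] by simp
    also have "\<dots> = shift p s" unfolding s_def shift_sum shift_sc ..
    finally have shift_s: "shift p s = 0" using u(2) by simp
    have supp_s: "supp n s"
      unfolding supp_def s_def sum_sc_apply
    proof (intro allI impI)
      fix i assume "(\<Sum>b\<in>B. u (shift p b) * b i) \<noteq> 0"
      then obtain b where "b \<in> B" "u (shift p b) * b i \<noteq> 0" by (rule sum.not_neutral_contains_not_neutral)
      then show "i \<in> {1..n}" using sB by (auto simp: supp_def)
    qed
    have "s = 0" by (rule shift_inj[of n s 0 p]) (use supp_s shift_s in simp_all)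
    moreover have indep: "(\<Sum>v\<in>B. sc (w v) v) = 0 \<Longrightarrow> v \<in> B \<Longrightarrow> w v = 0" for w v
      using iB V.dependent_finite[OF fB] by blast
    ultimately have "\<forall>b\<in>B. u (shift p b) = 0"
      using indep[of "\<lambda>b. u (shift p b)"] unfolding s_def by blast
    then show False using u(1) by blast
  qed
qed

lemma independent_unit_vecs: "V.independent (unit_vec ` {1..p})"
proof
  have inj: "inj unit_vec" by (rule injI) (metis unit_vec_def zero_neq_one)
  assume "V.dependent (unit_vec ` {1..p})"
  then obtain u where u: "\<exists>v\<in>unit_vec ` {1..p}. u v \<noteq> 0" "(\<Sum>v\<in>unit_vec ` {1..p}. sc (u v) v) = 0"
    using V.dependent_finite[of "unit_vec ` {1..p}"] by auto
  have z: "(\<Sum>i\<in>{1..p}. sc (u (unit_vec i)) (unit_vec i)) = 0"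
    using u(2) sum.reindex[OF inj_on_subset[OF inj], of "{1..p}" "\<lambda>v. sc (u v) v"] by simp
  have "u (unit_vec i) = 0" if "i \<in> {1..p}" for i
  proof -
    have "(\<Sum>k\<in>{1..p}. sc (u (unit_vec k)) (unit_vec k)) i = (\<Sum>k\<in>{1..p}. if k = i then u (unit_vec k) else 0)"
      unfolding sum_sc_apply by (intro sum.cong) (auto simp: unit_vec_def)
    also have "\<dots> = u (unit_vec i)" using that by (simp add: sum.delta')
    finally show ?thesis using z by simp
  qed
  then show False using u(1) by blast
qed

lemma card_unit_vecs: "card (unit_vec ` {1..p}) = p"
proof -
  have "inj unit_vec" by (rule injI) (metis unit_vec_def zero_neq_one)
  then show ?thesis using card_image[OF inj_on_subset[of unit_vec UNIV "{1..p}"]] by simp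
qed

lemma supp_in_span_unit_vecs: "supp p e \<Longrightarrow> e \<in> V.span (unit_vec ` {1..p})"
proof -
  assume e: "supp p e"
  have "e = (\<Sum>i\<in>{1..p}. sc (e i) (unit_vec i))"
  proof
    fix k
    have "(\<Sum>i\<in>{1..p}. sc (e i) (unit_vec i)) k = (\<Sum>i\<in>{1..p}. if i = k then e i else 0)"
      unfolding sum_sc_apply by (intro sum.cong) (auto simp: unit_vec_def)
    also have "\<dots> = e k" using e by (auto simp: sum.delta supp_def)
    finally show "e k = (\<Sum>i\<in>{1..p}. sc (e i) (unit_vec i)) k" by simp
  qed
  also have "\<dots> \<in> V.span (unit_vec ` {1..p})"
    by (intro V.span_sum V.span_scale V.span_base) auto
  finally show ?thesis .
qed

lemma shift_span: "u \<in> V.span B \<Longrightarrow> shift p u \<in> V.span (shift p ` B)"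
proof (induction rule: V.span_induct_alt)
  case base
  show ?case unfolding shift_0 by (rule V.span_zero)
next
  case (step c x y)
  have "shift p x \<in> V.span (shift p ` B)" using step(1) by (intro V.span_base imageI)
  then show ?case unfolding shift_add shift_sc using step(2) by (intro V.span_add V.span_scale)
qed

lemma extend_plane_span_subset:
  "extend_plane p (V.span B) \<subseteq> V.span (unit_vec ` {1..p} \<union> shift p ` B)"
proof
  fix v assume "v \<in> extend_plane p (V.span B)"
  then obtain e u where v: "v = e + shift p u" "supp p e" "u \<in> V.span B"
    unfolding extend_plane_def by blast
  have "e \<in> V.span (unit_vec ` {1..p} \<union> shift p ` B)"
    using supp_in_span_unit_vecs[OF v(2)] V.span_mono[of "unit_vec ` {1..p}"] by blast
  moreover have "shift p u \<in> V.span (unit_vec ` {1..p} \<union> shift p ` B)"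
    using shift_span[OF v(3)] V.span_mono[of "shift p ` B"] by blast
  ultimately show "v \<in> V.span (unit_vec ` {1..p} \<union> shift p ` B)" unfolding v(1) by (rule V.span_add)
qed

lemma subset_extend_plane_span:
  "unit_vec ` {1..p} \<union> shift p ` B \<subseteq> extend_plane p (V.span B)"
proof -
  have "unit_vec i + shift p 0 \<in> extend_plane p (V.span B)" if "i \<in> {1..p}" for i
  proof -
    have "supp p (unit_vec i)" using that by (auto simp: supp_def unit_vec_def)
    then show ?thesis unfolding extend_plane_def using V.span_zero by blast
  qed
  moreover have "0 + shift p b \<in> extend_plane p (V.span B)" if "b \<in> B" for b
    unfolding extend_plane_def using that V.span_base[of b B] supp_0 by blast
  ultimately show ?thesis by auto
qed

lemma independent_units_shift:
  assumes "finite B" "V.independent B" "\<forall>b\<in>B. supp n b"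
  shows "V.independent (unit_vec ` {1..p} \<union> shift p ` B)"
    and "card (unit_vec ` {1..p} \<union> shift p ` B) = p + card B"
proof -
  have "unit_vec i \<noteq> shift p b" if "i \<in> {1..p}" for i b
  proof
    assume "unit_vec i = shift p b"
    then have "unit_vec i i = shift p b i" by simp
    then show False using that by (simp add: unit_vec_def shift_def)
  qed
  then have disj: "unit_vec ` {1..p} \<inter> shift p ` B = {}" by blast
  show "V.independent (unit_vec ` {1..p} \<union> shift p ` B)"
    using independent_shift[OF assms] assms(1)
    by (intro independent_Un_supp[of _ _ p] independent_unit_vecs)
      (auto simp: unit_vec_def supp_def shift_def)
  show "card (unit_vec ` {1..p} \<union> shift p ` B) = p + card B"
    using card_Un_disjoint[OF _ _ disj] assms(1) card_unit_vecs card_image[OF independent_shift(2)[OF assms]]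
    by simp
qed

lemma dim_colspan_frame: "frame N d M \<Longrightarrow> V.dim (colspan N d M) = d"
  using V.dim_span_eq_card_independent[OF frame_independent] frame_card_cols
  by (simp add: colspan_span)

lemma unshift_colspan:
  assumes "p + n \<le> N"
  shows "unshift p n ` colspan N d M = V.span ((\<lambda>j. unshift p n (col N M j)) ` {1..d})"
proof -
  have "unshift p n ` colspan N d M = colspan n d (\<lambda>i j. M (i+p) j)"
  proof (intro equalityI subsetI)
    fix x assume "x \<in> unshift p n ` colspan N d M"
    then obtain c where "x = unshift p n (\<lambda>i. if i \<in> {1..N} then \<Sum>j=1..d. c j * M i j else 0)"
      unfolding colspan_def by blast
    then have "x = (\<lambda>i. if i \<in> {1..n} then \<Sum>j=1..d. c j * M (i+p) j else 0)"
      using assms by (auto simp: unshift_def fun_eq_iff)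
    then show "x \<in> colspan n d (\<lambda>i j. M (i+p) j)"
      unfolding colspan_def mem_Collect_eq by (rule exI[of _ c])
  next
    fix x assume "x \<in> colspan n d (\<lambda>i j. M (i+p) j)"
    then obtain c where "x = (\<lambda>i. if i \<in> {1..n} then \<Sum>j=1..d. c j * M (i+p) j else 0)"
      unfolding colspan_def by blast
    then have "x = unshift p n (\<lambda>i. if i \<in> {1..N} then \<Sum>j=1..d. c j * M i j else 0)"
      using assms by (auto simp: unshift_def fun_eq_iff)
    moreover have "(\<lambda>i. if i \<in> {1..N} then \<Sum>j=1..d. c j * M i j else 0) \<in> colspan N d M"
      unfolding colspan_def mem_Collect_eq by (rule exI[of _ c]) (rule refl)
    ultimately show "x \<in> unshift p n ` colspan N d M" by blast
  qed
  moreover have "col n (\<lambda>i j. M (i+p) j) j = unshift p n (col N M j)" for j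
    using assms by (auto simp: col_def unshift_def fun_eq_iff)
  ultimately show ?thesis by (simp add: colspan_span image_image)
qed

text \<open>The columns of the new frame are chosen among the projected columns of \<open>M\<close>, so that the same
  choice yields frames for planes near \<open>colspan N d M\<close>.\<close>

lemma frame_unshift:
  assumes fr: "frame N d M" and pnN: "p + n \<le> N"
    and E: "\<forall>e. supp p e \<longrightarrow> e \<in> colspan N d M" and S: "\<forall>v\<in>colspan N d M. supp (p+n) v"
  obtains H where "frame n (d-p) H" "colspan n (d-p) H = unshift p n ` colspan N d M"
    "\<forall>t\<in>{1..d-p}. \<exists>j\<in>{1..d}. col n H t = unshift p n (col N M j)"
proof -
  define P where "P = (\<lambda>j. unshift p n (col N M j)) ` {1..d}"
  obtain B where B: "B \<subseteq> P" "V.independent B" "P \<subseteq> V.span B"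
    using V.maximal_independent_subset[of P] by blast
  have fB: "finite B" using B(1) P_def finite_subset by blast
  have "supp n (unshift p n v)" for v by (simp add: unshift_def supp_def)
  then have sB: "\<forall>b\<in>B. supp n b" using B(1) unfolding P_def by blast
  have "V.span B = V.span P"
  proof
    show "V.span B \<subseteq> V.span P" using B(1) V.span_mono by blast
    show "V.span P \<subseteq> V.span B" using B(3) V.span_minimal V.subspace_span by blast
  qed
  then have spanB: "V.span B = unshift p n ` colspan N d M"
    by (simp add: unshift_colspan[OF pnN] P_def)
  define W where "W = unit_vec ` {1..p} \<union> shift p ` B"
  have colspan_eq: "colspan N d M = extend_plane p (V.span B)"
    using extend_plane_unshift[OF E S] spanB by simp
  have "V.span W = colspan N d M"
  proof
    show "V.span W \<subseteq> colspan N d M"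
      using subset_extend_plane_span[of p B] colspan_eq
      by (intro V.span_minimal[OF _ subspace_colspan]) (simp add: W_def)
    show "colspan N d M \<subseteq> V.span W"
      using extend_plane_span_subset[of p B] colspan_eq by (simp add: W_def)
  qed
  then have "card B = d - p"
    using V.dim_span_eq_card_independent[OF independent_units_shift(1)[OF fB B(2) sB, of p]]
      independent_units_shift(2)[OF fB B(2) sB, of p] dim_colspan_frame[OF fr]
    by (simp add: W_def)
  then obtain H where H: "frame n (d-p) H" "colspan n (d-p) H = V.span B" "\<forall>t\<in>{1..d-p}. col n H t \<in> B"
    by (rule frame_of_basis[OF fB _ B(2) sB])
  have "\<forall>t\<in>{1..d-p}. \<exists>j\<in>{1..d}. col n H t = unshift p n (col N M j)"
    using H(3) B(1) unfolding P_def by blast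
  then show ?thesis using that H(1) H(2) spanB by simp
qed

lemma gclosure_supp: "U \<in> gclosure n r S \<Longrightarrow> \<forall>u\<in>U. supp n u"
  unfolding gclosure_def using colspan_supp by blast

lemma extend_plane_in_gclosure:
  assumes pd: "p \<le> d" and pnN: "p + n \<le> N" and U: "U \<in> gclosure n (d-p) S"
  shows "extend_plane p U \<in> gclosure N d (extend_plane p ` S)"
proof -
  obtain H F where H: "frame n (d-p) H" "U = colspan n (d-p) H"
    "\<forall>k. frame n (d-p) (F k) \<and> colspan n (d-p) (F k) \<in> S"
    "\<forall>i j. (\<lambda>k. F k i j) \<longlonglongrightarrow> H i j"
    using U unfolding gclosure_def by blast
  have "\<forall>i j. (\<lambda>k. extend_frame p n d (F k) i j) \<longlonglongrightarrow> extend_frame p n d H i j"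
  proof (intro allI)
    fix i j
    show "(\<lambda>k. extend_frame p n d (F k) i j) \<longlonglongrightarrow> extend_frame p n d H i j"
      by (cases "j \<in> {1..p}"; cases "j \<in> {p+1..d} \<and> i \<in> {p+1..p+n}")
         (simp_all only: extend_frame_def if_True if_False simp_thms H(4) tendsto_const)
  qed
  moreover have "\<forall>k. frame N d (extend_frame p n d (F k)) \<and>
      colspan N d (extend_frame p n d (F k)) \<in> extend_plane p ` S"
    using H(3) frame_extend_frame[OF pd pnN] colspan_extend_frame[OF pd pnN] by auto
  ultimately show ?thesis
    using frame_extend_frame[OF pd pnN H(1)] colspan_extend_frame[OF pd pnN] H(2)
    unfolding gclosure_def mem_Collect_eq
    by (intro exI[of _ "extend_frame p n d H"] exI[of _ "\<lambda>k. extend_frame p n d (F k)"] conjI) auto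
qed

lemma frame_rows_zero:
  assumes fr: "frame N d F" and S: "\<forall>v\<in>colspan N d F. supp m v" and i: "m < i"
  shows "F i j = 0"
proof (cases "i \<in> {1..N} \<and> j \<in> {1..d}")
  case True
  then have "supp m (col N F j)" using S col_in_colspan by blast
  then have "col N F j i = 0" using i unfolding supp_def by fastforce
  then show ?thesis using True by (simp add: col_def)
next
  case False
  then show ?thesis using frame_supp[OF fr] by blast
qed

text \<open>By \<open>extend_plane_unshift\<close>, the planes \<open>E\<^sub>p \<subseteq> V \<subseteq> C\<^sup>p\<^sup>+\<^sup>n\<close> are exactly the images of \<open>extend_plane p\<close>.\<close>

lemma extend_plane_limit:
  assumes fr: "frame N d M" and FM: "\<forall>i j. (\<lambda>k. F k i j) \<longlonglongrightarrow> M i j" and frF: "\<forall>k. frame N d (F k)"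
    and E: "\<And>k. \<forall>e. supp p e \<longrightarrow> e \<in> colspan N d (F k)"
    and S: "\<And>k. \<forall>v\<in>colspan N d (F k). supp (p+n) v"
  shows "\<forall>e. supp p e \<longrightarrow> e \<in> colspan N d M" and "\<forall>v\<in>colspan N d M. supp (p+n) v"
proof -
  show "\<forall>e. supp p e \<longrightarrow> e \<in> colspan N d M"
  proof (intro allI impI)
    fix e assume "supp p e"
    then show "e \<in> colspan N d M" using E by (intro colspan_limit[OF fr FM, of "\<lambda>k. e"]) auto
  qed
  have M_zero: "M i j = 0" if "p + n < i" for i j
  proof -
    have "(\<lambda>k. F k i j) = (\<lambda>k. 0)" using frame_rows_zero[OF frF[rule_format] S that] by simp
    then show ?thesis using FM by (metis LIMSEQ_const_iff)
  qed
  show "\<forall>v\<in>colspan N d M. supp (p+n) v"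
  proof
    fix v assume "v \<in> colspan N d M"
    then obtain c where c: "v = (\<lambda>i. if i \<in> {1..N} then \<Sum>j=1..d. c j * M i j else 0)"
      unfolding colspan_def by blast
    show "supp (p+n) v"
      unfolding supp_def c using M_zero by (metis (no_types, lifting) atLeastAtMost_iff not_le
          mult_zero_right sum.neutral)
  qed
qed

lemma tendsto_unshift_cols:
  assumes FM: "\<forall>i j. (\<lambda>k. F k i j) \<longlonglongrightarrow> M i j" and pnN: "p + n \<le> N" and fr: "frame n r H"
    and \<phi>: "\<forall>t\<in>{1..r}. col n H t = unshift p n (col N M (\<phi> t))"
  shows "\<forall>i t. (\<lambda>k. if t \<in> {1..r} then unshift p n (col N (F k) (\<phi> t)) i else 0) \<longlonglongrightarrow> H i t"
proof (intro allI)
  fix i t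
  show "(\<lambda>k. if t \<in> {1..r} then unshift p n (col N (F k) (\<phi> t)) i else 0) \<longlonglongrightarrow> H i t"
  proof (cases "t \<in> {1..r} \<and> i \<in> {1..n}")
    case True
    have "H i t = col n H t i" using True by (simp add: col_def)
    also have "\<dots> = M (i+p) (\<phi> t)" using \<phi> True pnN by (simp add: unshift_def col_def)
    finally show ?thesis using FM True pnN by (simp add: unshift_def col_def)
  next
    case False
    then have "H i t = 0" using frame_supp[OF fr] by blast
    moreover have "(\<lambda>k. if t \<in> {1..r} then unshift p n (col N (F k) (\<phi> t)) i else 0) = (\<lambda>k. 0)"
      using False by (auto simp: unshift_def)
    ultimately show ?thesis by simp
  qed
qed

lemma unshift_frames_limit:
  assumes fr: "frame N d M" and FM: "\<forall>i j. (\<lambda>k. F k i j) \<longlonglongrightarrow> M i j" and frF: "\<forall>k. frame N d (F k)"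
    and pnN: "p + n \<le> N"
    and E: "\<And>k. \<forall>e. supp p e \<longrightarrow> e \<in> colspan N d (F k)"
    and S: "\<And>k. \<forall>v\<in>colspan N d (F k). supp (p+n) v"
  obtains H K G where "frame n (d-p) H" "colspan n (d-p) H = unshift p n ` colspan N d M"
    and "\<And>k. K \<le> k \<Longrightarrow> frame n (d-p) (G k) \<and> colspan n (d-p) (G k) = unshift p n ` colspan N d (F k)"
    and "\<forall>r t. (\<lambda>k. G k r t) \<longlonglongrightarrow> H r t"
proof -
  note EM = extend_plane_limit(1)[OF fr FM frF E S] and SM = extend_plane_limit(2)[OF fr FM frF E S]
  obtain H where H: "frame n (d-p) H" "colspan n (d-p) H = unshift p n ` colspan N d M"
    and cols: "\<forall>t\<in>{1..d-p}. \<exists>j\<in>{1..d}. col n H t = unshift p n (col N M j)"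
    by (rule frame_unshift[OF fr pnN EM SM])
  obtain \<phi> where \<phi>: "\<forall>t\<in>{1..d-p}. \<phi> t \<in> {1..d} \<and> col n H t = unshift p n (col N M (\<phi> t))"
    using cols by metis
  define G where "G k = (\<lambda>r t. if t \<in> {1..d-p} then unshift p n (col N (F k) (\<phi> t)) r else 0)" for k
  have supG: "\<forall>k r t. G k r t \<noteq> 0 \<longrightarrow> r \<in> {1..n} \<and> t \<in> {1..d-p}"
    by (auto simp: G_def unshift_def split: if_splits)
  have limG: "\<forall>r t. (\<lambda>k. G k r t) \<longlonglongrightarrow> H r t"
    unfolding G_def using \<phi> by (intro tendsto_unshift_cols[OF FM pnN H(1)]) blast
  obtain K where K: "\<forall>k\<ge>K. frame n (d-p) (G k)"
    using eventually_frame[OF H(1) supG limG] by blast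
  have "frame n (d-p) (G k) \<and> colspan n (d-p) (G k) = unshift p n ` colspan N d (F k)" if "K \<le> k" for k
  proof -
    obtain G' where G': "frame n (d-p) G'" "colspan n (d-p) G' = unshift p n ` colspan N d (F k)"
      by (rule frame_unshift[OF frF[rule_format] pnN E S])
    have "col n (G k) t \<in> colspan n (d-p) G'" if "t \<in> {1..d-p}" for t
    proof -
      have "col n (G k) t = unshift p n (col N (F k) (\<phi> t))"
        using that by (auto simp: col_def G_def unshift_def fun_eq_iff)
      then show ?thesis using G'(2) \<phi> that col_in_colspan by blast
    qed
    moreover have "frame n (d-p) (G k)" using K that by blast
    ultimately show ?thesis using colspan_eq_if_cols_in[OF _ G'(1)] G'(2) by simp
  qed
  then show ?thesis using that[OF H(1,2) _ limG] by blast
qed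

lemma gclosure_extend_plane_obtain:
  assumes pnN: "p + n \<le> N" and sS: "\<forall>U\<in>S. \<forall>u\<in>U. supp n u"
    and V: "V \<in> gclosure N d (extend_plane p ` S)"
  obtains U where "U \<in> gclosure n (d-p) S" "V = extend_plane p U"
proof -
  obtain M F where fr: "frame N d M" and V_eq: "V = colspan N d M"
    and F: "\<forall>k. frame N d (F k) \<and> colspan N d (F k) \<in> extend_plane p ` S"
    and FM: "\<forall>i j. (\<lambda>k. F k i j) \<longlonglongrightarrow> M i j"
    using V unfolding gclosure_def by blast
  have "\<forall>k. \<exists>U. U \<in> S \<and> colspan N d (F k) = extend_plane p U" using F by blast
  then obtain Uk where "\<forall>k. Uk k \<in> S \<and> colspan N d (F k) = extend_plane p (Uk k)" by metis
  then have Uk: "\<And>k. Uk k \<in> S" "\<And>k. colspan N d (F k) = extend_plane p (Uk k)" by blast+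
  have frF: "\<forall>k. frame N d (F k)" using F by blast
  have sUk: "\<forall>u\<in>Uk k. supp n u" for k using sS Uk(1) by blast
  note E = extend_plane_contains[OF Uk(2)] and S = extend_plane_supp[OF Uk(2) sUk]
  obtain H K G where H: "frame n (d-p) H" "colspan n (d-p) H = unshift p n ` colspan N d M"
    and G: "\<And>k. K \<le> k \<Longrightarrow> frame n (d-p) (G k) \<and> colspan n (d-p) (G k) = unshift p n ` colspan N d (F k)"
    and GH: "\<forall>r t. (\<lambda>k. G k r t) \<longlonglongrightarrow> H r t"
    using unshift_frames_limit[OF fr FM frF pnN E S] by blast
  have "extend_plane p (unshift p n ` colspan N d M) = colspan N d M"
    by (rule extend_plane_unshift[OF extend_plane_limit[OF fr FM frF E S]])
  then have "V = extend_plane p (colspan n (d-p) H)" by (simp add: V_eq H(2))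
  moreover have "colspan n (d-p) H \<in> gclosure n (d-p) S"
  proof -
    have "frame n (d-p) (G (k+K)) \<and> colspan n (d-p) (G (k+K)) \<in> S" for k
    proof -
      have "unshift p n ` colspan N d (F (k+K)) = Uk (k+K)"
        unfolding Uk(2) by (rule unshift_extend_plane[OF sUk])
      then show ?thesis using G[of "k+K"] Uk(1) by simp
    qed
    moreover have "\<forall>r t. (\<lambda>k. G (k+K) r t) \<longlonglongrightarrow> H r t"
      using GH LIMSEQ_ignore_initial_segment by blast
    ultimately show ?thesis unfolding gclosure_def mem_Collect_eq
      by (intro exI[of _ H] exI[of _ "\<lambda>k. G (k+K)"] conjI H(1) refl allI) blast+
  qed
  ultimately show ?thesis using that by blast
qed

lemma gclosure_image_extend_plane:
  assumes "p \<le> d" "p + n \<le> N" "\<forall>U\<in>S. \<forall>u\<in>U. supp n u"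
  shows "gclosure N d (extend_plane p ` S) = extend_plane p ` gclosure n (d-p) S"
proof
  show "gclosure N d (extend_plane p ` S) \<subseteq> extend_plane p ` gclosure n (d-p) S"
    using gclosure_extend_plane_obtain[OF assms(2,3)] by (metis image_eqI subsetI)
  show "extend_plane p ` gclosure n (d-p) S \<subseteq> gclosure N d (extend_plane p ` S)"
    using extend_plane_in_gclosure[OF assms(1,2)] by blast
qed

section \<open>Matrices acting on planes\<close>

definition mat_vec :: "nat \<Rightarrow> cmatrix \<Rightarrow> cvector \<Rightarrow> cvector" where
  "mat_vec N g v = (\<lambda>i. if i \<in> {1..N} then (\<Sum>j=1..N. g i j * v j) else 0)"

lemma act_mat_vec: "act N g V = mat_vec N g ` V"
  unfolding act_def mat_vec_def by simp

lemma mat_vec_add: "mat_vec N g (x + y) = mat_vec N g x + mat_vec N g y"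
  by (auto simp: mat_vec_def fun_eq_iff sum.distrib algebra_simps)

lemma mat_vec_diff: "mat_vec N g (x - y) = mat_vec N g x - mat_vec N g y"
  by (auto simp: mat_vec_def fun_eq_iff sum_subtractf algebra_simps)

lemma mat_vec_zero: "mat_vec N g 0 = 0"
  by (auto simp: mat_vec_def fun_eq_iff)

lemma supp_mat_vec: "supp N (mat_vec N g v)"
  by (auto simp: mat_vec_def supp_def)

lemma mat_vec_matmul: "mat_vec N (matmul N a b) v = mat_vec N a (mat_vec N b v)"
proof
  fix i
  show "mat_vec N (matmul N a b) v i = mat_vec N a (mat_vec N b v) i"
  proof (cases "i \<in> {1..N}")
    case True
    have "mat_vec N (matmul N a b) v i = (\<Sum>j=1..N. (\<Sum>k=1..N. a i k * b k j) * v j)"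
      using True by (auto simp: mat_vec_def matmul_def intro!: sum.cong)
    also have "\<dots> = (\<Sum>j=1..N. \<Sum>k=1..N. a i k * (b k j * v j))"
      by (simp add: sum_distrib_right mult.assoc)
    also have "\<dots> = (\<Sum>k=1..N. \<Sum>j=1..N. a i k * (b k j * v j))"
      by (rule sum.swap)
    also have "\<dots> = (\<Sum>k=1..N. a i k * (\<Sum>j=1..N. b k j * v j))"
      by (simp add: sum_distrib_left)
    also have "\<dots> = mat_vec N a (mat_vec N b v) i"
      using True by (auto simp: mat_vec_def intro!: sum.cong)
    finally show ?thesis .
  next
    case False then show ?thesis by (auto simp: mat_vec_def)
  qed
qed

lemma mat_vec_ident: "supp N v \<Longrightarrow> mat_vec N (ident N) v = v"
proof
  fix i assume s: "supp N v"
  show "mat_vec N (ident N) v i = v i"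
  proof (cases "i \<in> {1..N}")
    case True
    have "(\<Sum>j=1..N. ident N i j * v j) = (\<Sum>j=1..N. if j = i then v j else 0)"
      using True by (intro sum.cong) (auto simp: ident_def)
    then show ?thesis using True by (simp add: mat_vec_def sum.delta')
  next
    case False then show ?thesis using s by (auto simp: mat_vec_def supp_def)
  qed
qed

lemma GL_mat_vec_eq_0: assumes "g \<in> GL N" "supp N v" "mat_vec N g v = 0" shows "v = 0"
proof -
  obtain h where h: "matmul N h g = ident N" using assms(1) unfolding GL_def by blast
  have "v = mat_vec N (ident N) v" using mat_vec_ident[OF assms(2)] by simp
  also have "\<dots> = mat_vec N h (mat_vec N g v)" using h mat_vec_matmul by metis
  also have "\<dots> = 0" using assms(3) mat_vec_zero by simp
  finally show ?thesis .
qed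

lemma GL_mat_vec_inj: assumes "g \<in> GL N" "supp N v" "supp N v'" "mat_vec N g v = mat_vec N g v'" shows "v = v'"
proof -
  have "supp N (v - v')" unfolding supp_def
  proof (intro allI impI)
    fix i assume "(v - v') i \<noteq> 0"
    then have "v i \<noteq> 0 \<or> v' i \<noteq> 0" by auto
    then show "i \<in> {1..N}" using assms(2,3) unfolding supp_def by blast
  qed
  moreover have "mat_vec N g (v - v') = 0" using assms(4) by (simp add: mat_vec_diff)
  ultimately show ?thesis using GL_mat_vec_eq_0[OF assms(1)] by fastforce
qed

definition mult_frame :: "nat \<Rightarrow> cmatrix \<Rightarrow> cmatrix \<Rightarrow> cmatrix" where
  "mult_frame N g C = (\<lambda>i j. if i \<in> {1..N} then (\<Sum>k=1..N. g i k * C k j) else 0)"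

lemma mat_vec_comb: "mat_vec N g (\<lambda>i. if i \<in> {1..N} then \<Sum>j=1..r. c j * C i j else 0)
      = (\<lambda>i. if i \<in> {1..N} then \<Sum>j=1..r. c j * mult_frame N g C i j else 0)"
proof
  fix i
  show "mat_vec N g (\<lambda>i. if i \<in> {1..N} then \<Sum>j=1..r. c j * C i j else 0) i
    = (if i \<in> {1..N} then \<Sum>j=1..r. c j * mult_frame N g C i j else 0)"
  proof (cases "i \<in> {1..N}")
    case True
    have "mat_vec N g (\<lambda>i. if i \<in> {1..N} then \<Sum>j=1..r. c j * C i j else 0) i
        = (\<Sum>k=1..N. g i k * (\<Sum>j=1..r. c j * C k j))"
      using True by (auto simp: mat_vec_def intro!: sum.cong)
    also have "\<dots> = (\<Sum>k=1..N. \<Sum>j=1..r. c j * (g i k * C k j))"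
      by (simp add: sum_distrib_left algebra_simps)
    also have "\<dots> = (\<Sum>j=1..r. \<Sum>k=1..N. c j * (g i k * C k j))"
      by (rule sum.swap)
    also have "\<dots> = (\<Sum>j=1..r. c j * mult_frame N g C i j)"
      using True by (simp add: mult_frame_def sum_distrib_left)
    finally show ?thesis using True by simp
  next
    case False then show ?thesis by (auto simp: mat_vec_def)
  qed
qed

lemma mat_vec_colspan: "mat_vec N g ` colspan N r C = colspan N r (mult_frame N g C)"
  unfolding colspan_def image_def using mat_vec_comb by auto

lemma frame_mult_frame:
  assumes g: "g \<in> GL N" and fr: "frame N r C"
  shows "frame N r (mult_frame N g C)"
  unfolding frame_def
proof (rule conjI; intro allI impI)
  fix i j assume a: "mult_frame N g C i j \<noteq> 0"
  then have i: "i \<in> {1..N}" by (auto simp: mult_frame_def split: if_splits)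
  have "j \<in> {1..r}"
  proof (rule ccontr)
    assume "j \<notin> {1..r}"
    then have Cz: "\<And>k. C k j = 0" using frame_supp[OF fr] by blast
    have "mult_frame N g C i j = 0" by (simp add: mult_frame_def Cz)
    then show False using a by simp
  qed
  then show "i \<in> {1..N} \<and> j \<in> {1..r}" using i by simp
next
  fix c :: "nat \<Rightarrow> complex" assume c: "\<forall>i. (\<Sum>j=1..r. c j * mult_frame N g C i j) = 0"
  define v where "v = (\<lambda>i. if i \<in> {1..N} then \<Sum>j=1..r. c j * C i j else 0)"
  have "mat_vec N g v = 0" unfolding v_def mat_vec_comb using c by (auto simp: fun_eq_iff)
  moreover have "supp N v" by (auto simp: v_def supp_def)
  ultimately have v0: "v = 0" using GL_mat_vec_eq_0[OF g] by blast
  have "\<forall>i. (\<Sum>j=1..r. c j * C i j) = 0"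
  proof
    fix i show "(\<Sum>j=1..r. c j * C i j) = 0"
    proof (cases "i \<in> {1..N}")
      case True then show ?thesis using fun_cong[OF v0, of i] by (simp add: v_def)
    next
      case False
      then have "\<And>j. C i j = 0" using frame_supp[OF fr] by blast
      then show ?thesis by simp
    qed
  qed
  then show "\<forall>j\<in>{1..r}. c j = 0" using frame_indep[OF fr] by blast
qed

definition upper_triangular :: "cmatrix \<Rightarrow> bool" where
  "upper_triangular g \<longleftrightarrow> (\<forall>i j. j < i \<longrightarrow> g i j = 0)"

lemma borel_iff: "g \<in> Defs.borel N \<longleftrightarrow> g \<in> GL N \<and> upper_triangular g"
  by (simp add: Defs.borel_def upper_triangular_def)

lemma mat_vec_supp:
  assumes g: "\<forall>i j. g i j \<noteq> 0 \<longrightarrow> j \<le> p \<longrightarrow> i \<le> p" and e: "supp p e"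
  shows "supp p (mat_vec N g e)"
  unfolding supp_def
proof (intro allI impI)
  fix i assume i: "mat_vec N g e i \<noteq> 0"
  then have "(\<Sum>j=1..N. g i j * e j) \<noteq> 0" by (auto simp: mat_vec_def split: if_splits)
  then obtain j where "g i j * e j \<noteq> 0" by (rule sum.not_neutral_contains_not_neutral)
  then have "g i j \<noteq> 0" "e j \<noteq> 0" by auto
  then have "i \<le> p" using g e unfolding supp_def by auto
  moreover have "1 \<le> i" using i by (auto simp: mat_vec_def split: if_splits)
  ultimately show "i \<in> {1..p}" by simp
qed

lemma upper_triangular_supp:
  assumes "upper_triangular g" "supp p e" shows "supp p (mat_vec N g e)"
proof (rule mat_vec_supp[OF _ assms(2)])
  show "\<forall>i j. g i j \<noteq> 0 \<longrightarrow> j \<le> p \<longrightarrow> i \<le> p"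
    using assms(1) unfolding upper_triangular_def by (metis le_trans not_less)
qed

definition std_frame :: "nat \<Rightarrow> cmatrix" where
  "std_frame p = (\<lambda>i j. if i = j \<and> j \<in> {1..p} then 1 else 0)"

lemma std_frame_comb: "p \<le> N \<Longrightarrow> (\<lambda>i. if i \<in> {1..N} then \<Sum>j=1..p. c j * std_frame p i j else 0)
   = (\<lambda>i. if i \<in> {1..p} then c i else 0)"
proof
  fix i assume pN: "p \<le> N"
  have "(\<Sum>j=1..p. c j * std_frame p i j) = (\<Sum>j=1..p. if j = i then c j else 0)"
    by (intro sum.cong) (auto simp: std_frame_def)
  then show "(if i \<in> {1..N} then \<Sum>j=1..p. c j * std_frame p i j else 0) = (if i \<in> {1..p} then c i else 0)"
    using pN by (auto simp: sum.delta')
qed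

lemma colspan_std_frame: "p \<le> N \<Longrightarrow> colspan N p (std_frame p) = {e. supp p e}"
proof
  assume pN: "p \<le> N"
  show "colspan N p (std_frame p) \<subseteq> {e. supp p e}"
    unfolding colspan_def std_frame_comb[OF pN] by (auto simp: supp_def split: if_splits)
  show "{e. supp p e} \<subseteq> colspan N p (std_frame p)"
  proof
    fix e assume "e \<in> {e. supp p e}"
    then have "e = (\<lambda>i. if i \<in> {1..p} then e i else 0)" by (auto simp: supp_def fun_eq_iff)
    then show "e \<in> colspan N p (std_frame p)" unfolding colspan_def std_frame_comb[OF pN] mem_Collect_eq
      by (rule exI[of _ e])
  qed
qed

lemma frame_std_frame: "p \<le> N \<Longrightarrow> frame N p (std_frame p)"
  unfolding frame_def
proof (rule conjI; intro allI impI)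
  fix i j assume "p \<le> N" "std_frame p i j \<noteq> 0"
  then show "i \<in> {1..N} \<and> j \<in> {1..p}" by (auto simp: std_frame_def split: if_splits)
next
  fix c :: "nat \<Rightarrow> complex" assume pN: "p \<le> N" and c: "\<forall>i. (\<Sum>j=1..p. c j * std_frame p i j) = 0"
  show "\<forall>j\<in>{1..p}. c j = 0"
  proof
    fix j assume j: "j \<in> {1..p}"
    have "(if j \<in> {1..N} then \<Sum>k=1..p. c k * std_frame p j k else 0) = (if j \<in> {1..p} then c j else 0)"
      using fun_cong[OF std_frame_comb[OF pN], of j] by simp
    then show "c j = 0" using j c pN by (simp split: if_splits)
  qed
qed

text \<open>An invertible upper triangular matrix maps \<open>E\<^sub>p\<close> injectively into itself, hence onto:
  compare the column spans of the \<open>p\<close>-frames \<open>std_frame p\<close> and \<open>g \<cdot> std_frame p\<close>.\<close>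

lemma upper_triangular_surj:
  assumes g: "g \<in> GL N" "upper_triangular g" and pN: "p \<le> N" and e: "supp p e"
  shows "\<exists>e'. supp p e' \<and> mat_vec N g e' = e"
proof -
  have "colspan N p (mult_frame N g (std_frame p)) \<subseteq> colspan N p (std_frame p)"
    unfolding mat_vec_colspan[symmetric] colspan_std_frame[OF pN] using upper_triangular_supp[OF g(2)] by blast
  then have eq: "colspan N p (mult_frame N g (std_frame p)) = colspan N p (std_frame p)"
    using colspan_eq_if_subset frame_mult_frame[OF g(1) frame_std_frame[OF pN]] frame_std_frame[OF pN] by blast
  have "e \<in> colspan N p (std_frame p)" using e colspan_std_frame[OF pN] by simp
  then have "e \<in> colspan N p (mult_frame N g (std_frame p))" using eq by simp
  then have "e \<in> mat_vec N g ` colspan N p (std_frame p)" by (simp only: mat_vec_colspan)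
  then obtain e' where "e' \<in> colspan N p (std_frame p)" "e = mat_vec N g e'" by blast
  then show ?thesis using colspan_std_frame[OF pN] by auto
qed

lemma mat_vec_col: "j \<in> {1..N} \<Longrightarrow> mat_vec N g (col N h j) = col N (matmul N g h) j"
  by (auto simp: mat_vec_def col_def matmul_def fun_eq_iff intro!: sum.cong)

lemma col_ident: "j \<in> {1..N} \<Longrightarrow> col N (ident N) j = unit_vec j"
  by (auto simp: col_def ident_def unit_vec_def fun_eq_iff)

lemma upper_triangular_inverse:
  assumes g: "g \<in> GL N" "upper_triangular g" and h: "sqmat N h" "matmul N g h = ident N"
  shows "upper_triangular h"
  unfolding upper_triangular_def
proof (intro allI impI)
  fix i j :: nat assume ji: "j < i"
  show "h i j = 0"
  proof (cases "i \<in> {1..N} \<and> j \<in> {1..N}")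
    case True
    then have jN: "j \<le> N" "j \<in> {1..N}" by auto
    have "supp j (unit_vec j)" using jN by (auto simp: supp_def unit_vec_def)
    then obtain e' where e': "supp j e'" "mat_vec N g e' = unit_vec j" using upper_triangular_surj[OF g jN(1)] by blast
    have "mat_vec N g (col N h j) = unit_vec j" using mat_vec_col[OF jN(2)] h(2) col_ident[OF jN(2)] by simp
    moreover have "supp N (col N h j)" "supp N e'" using e' jN by (auto simp: col_def supp_def)
    ultimately have "col N h j = e'" using GL_mat_vec_inj[OF g(1)] e'(2) by metis
    then have "col N h j i = 0" using e'(1) ji by (auto simp: supp_def)
    then show ?thesis using True by (simp add: col_def)
  next
    case False then show ?thesis using h(1) unfolding sqmat_def by blast
  qed
qed

abbreviation sub_block :: "nat \<Rightarrow> nat \<Rightarrow> cmatrix \<Rightarrow> cmatrix" where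
  "sub_block p n g \<equiv> principal_sub p (p+n) g"

lemma sub_block_entry: "sub_block p n g i j = (if i \<in> {1..n} \<and> j \<in> {1..n} then g (i+p) (j+p) else 0)"
  by (simp add: principal_sub_def)

lemma mat_vec_out: "i \<notin> {1..N} \<Longrightarrow> mat_vec N g v i = 0"
  unfolding mat_vec_def by (simp only: if_not_P if_False)

lemma sum_block_shift:
  fixes p n N :: nat
  assumes pnN: "p + n \<le> N" and z: "\<And>k. k \<in> {1..N} \<Longrightarrow> k \<notin> {p+1..p+n} \<Longrightarrow> f k = 0"
  shows "(\<Sum>k=1..N. f k) = (\<Sum>k=1..n. f (k+p))"
proof -
  have "(\<Sum>k=1..N. f k) = (\<Sum>k\<in>{1+p..n+p}. f k)"
  proof (rule sum.mono_neutral_right)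
    show "finite {1..N}" by simp
    show "{1+p..n+p} \<subseteq> {1..N}" using pnN by auto
    show "\<forall>i\<in>{1..N} - {1+p..n+p}. f i = 0" using z by auto
  qed
  also have "\<dots> = (\<Sum>k=1..n. f (k+p))" by (rule sum.shift_bounds_cl_nat_ivl)
  finally show ?thesis .
qed

lemma sub_block_inverse:
  assumes g: "upper_triangular g" and h: "upper_triangular h" and gh: "matmul N g h = ident N" and pnN: "p + n \<le> N"
  shows "matmul n (sub_block p n g) (sub_block p n h) = ident n"
proof (intro ext)
  fix i j
  show "matmul n (sub_block p n g) (sub_block p n h) i j = ident n i j"
  proof (cases "i \<in> {1..n} \<and> j \<in> {1..n}")
    case True
    have "ident n i j = ident N (i+p) (j+p)" using True pnN by (auto simp: ident_def)
    also have "\<dots> = (\<Sum>k=1..N. g (i+p) k * h k (j+p))"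
      using gh[symmetric] True pnN by (simp add: matmul_def)
    also have "\<dots> = (\<Sum>k=1..n. g (i+p) (k+p) * h (k+p) (j+p))"
    proof (rule sum_block_shift[OF pnN])
      fix k assume "k \<in> {1..N}" "k \<notin> {p+1..p+n}"
      then consider "k \<le> p" | "k > p + n" by fastforce
      then show "g (i+p) k * h k (j+p) = 0"
      proof cases
        case 1 then have "k < i + p" using True by auto
        then show ?thesis using g unfolding upper_triangular_def by simp
      next
        case 2 then have "j + p < k" using True by auto
        then show ?thesis using h unfolding upper_triangular_def by simp
      qed
    qed
    also have "\<dots> = matmul n (sub_block p n g) (sub_block p n h) i j"
      using True by (auto simp: matmul_def sub_block_entry intro!: sum.cong)
    finally show ?thesis by simp
  next
    case False
    have "matmul n (sub_block p n g) (sub_block p n h) i j = 0"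
      unfolding matmul_def using False by (simp only: if_False)
    moreover have "ident n i j = 0" unfolding ident_def using False by auto
    ultimately show ?thesis by simp
  qed
qed

lemma upper_triangular_sub_block: "upper_triangular g \<Longrightarrow> upper_triangular (sub_block p n g)"
  by (auto simp: upper_triangular_def sub_block_entry)

lemma sqmat_sub_block: "sqmat n (sub_block p n g)"
  by (auto simp: sqmat_def sub_block_entry split: if_splits)

lemma sub_block_borel:
  assumes g: "g \<in> Defs.borel N" and pnN: "p + n \<le> N"
  shows "sub_block p n g \<in> Defs.borel n"
proof -
  obtain h where h: "sqmat N h" "matmul N g h = ident N" "matmul N h g = ident N"
    using g unfolding borel_iff GL_def by blast
  have ug: "upper_triangular g" "g \<in> GL N" using g borel_iff by auto
  have uh: "upper_triangular h" using upper_triangular_inverse[OF ug(2) ug(1) h(1) h(2)] .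
  have "matmul n (sub_block p n g) (sub_block p n h) = ident n" by (rule sub_block_inverse[OF ug(1) uh h(2) pnN])
  moreover have "matmul n (sub_block p n h) (sub_block p n g) = ident n" by (rule sub_block_inverse[OF uh ug(1) h(3) pnN])
  ultimately have "sub_block p n g \<in> GL n" unfolding GL_def using sqmat_sub_block by blast
  then show ?thesis using upper_triangular_sub_block[OF ug(1)] borel_iff by blast
qed

lemma mat_vec_shift_row:
  assumes u: "supp n u" and pnN: "p + n \<le> N" and r: "r \<in> {1..n}"
  shows "mat_vec N g (shift p u) (r+p) = mat_vec n (sub_block p n g) u r"
proof -
  have "mat_vec N g (shift p u) (r+p) = (\<Sum>j=1..N. g (r+p) j * shift p u j)"
    using r pnN by (simp add: mat_vec_def)
  also have "\<dots> = (\<Sum>j=1..n. g (r+p) (j+p) * shift p u (j+p))"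
  proof (rule sum_block_shift[OF pnN])
    fix k assume "k \<in> {1..N}" "k \<notin> {p+1..p+n}"
    then have "shift p u k = 0" using u by (auto simp: shift_def supp_def)
    then show "g (r+p) k * shift p u k = 0" by simp
  qed
  also have "\<dots> = mat_vec n (sub_block p n g) u r"
    using r by (auto simp: mat_vec_def sub_block_entry shift_def intro!: sum.cong)
  finally show ?thesis .
qed

lemma mat_vec_shift_high:
  assumes g: "upper_triangular g" and u: "supp n u" and i: "p + n < i"
  shows "mat_vec N g (shift p u) i = 0"
proof -
  have "(\<Sum>j=1..N. g i j * shift p u j) = 0"
  proof (rule sum.neutral, rule ballI)
    fix j assume "j \<in> {1..N}"
    show "g i j * shift p u j = 0"
    proof (cases "j < i")
      case True then show ?thesis using g by (simp add: upper_triangular_def)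
    next
      case False then have "shift p u j = 0" using u i by (auto simp: shift_def supp_def)
      then show ?thesis by simp
    qed
  qed
  then show ?thesis by (simp add: mat_vec_def)
qed

lemma mat_vec_shift_decomp:
  assumes g: "upper_triangular g" and u: "supp n u" and pnN: "p + n \<le> N"
  shows "mat_vec N g (shift p u) = (\<lambda>i. if i \<le> p then mat_vec N g (shift p u) i else 0) + shift p (mat_vec n (sub_block p n g) u)"
proof
  fix i
  show "mat_vec N g (shift p u) i = ((\<lambda>i. if i \<le> p then mat_vec N g (shift p u) i else 0) + shift p (mat_vec n (sub_block p n g) u)) i"
  proof (cases "i \<le> p")
    case True then show ?thesis by (simp add: shift_def)
  next
    case False
    show ?thesis
    proof (cases "i \<le> p + n")
      case True
      then have "i - p \<in> {1..n}" using False by auto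
      from mat_vec_shift_row[OF u pnN this, of g] show ?thesis using False by (simp add: shift_def)
    next
      case F2: False
      then have "i - p \<notin> {1..n}" by auto
      then have "mat_vec n (sub_block p n g) u (i - p) = 0" by (rule mat_vec_out)
      then show ?thesis using mat_vec_shift_high[OF g u] F2 False by (simp add: shift_def)
    qed
  qed
qed

lemma borel_act_extend_plane:
  assumes g: "g \<in> Defs.borel N" and sU: "\<forall>u\<in>U. supp n u" and pnN: "p + n \<le> N"
  shows "mat_vec N g ` extend_plane p U = extend_plane p (mat_vec n (sub_block p n g) ` U)"
proof
  have ug: "upper_triangular g" "g \<in> GL N" using g borel_iff by auto
  show "mat_vec N g ` extend_plane p U \<subseteq> extend_plane p (mat_vec n (sub_block p n g) ` U)"
  proof
    fix x assume "x \<in> mat_vec N g ` extend_plane p U"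
    then obtain e u where x: "x = mat_vec N g (e + shift p u)" "supp p e" "u \<in> U"
      unfolding extend_plane_def by blast
    define r where "r = (\<lambda>i. if i \<le> p then mat_vec N g (shift p u) i else 0)"
    have D: "mat_vec N g (shift p u) = r + shift p (mat_vec n (sub_block p n g) u)"
      unfolding r_def by (rule mat_vec_shift_decomp[OF ug(1) sU[rule_format, OF x(3)] pnN])
    have "x = (mat_vec N g e + r) + shift p (mat_vec n (sub_block p n g) u)"
      unfolding x(1) mat_vec_add D by (simp add: add.assoc)
    moreover have "supp p (mat_vec N g e + r)"
      unfolding r_def by (intro supp_add upper_triangular_supp[OF ug(1) x(2)] supp_truncate[OF supp_mat_vec])
    ultimately show "x \<in> extend_plane p (mat_vec n (sub_block p n g) ` U)" unfolding extend_plane_def using x(3) by blast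
  qed
  show "extend_plane p (mat_vec n (sub_block p n g) ` U) \<subseteq> mat_vec N g ` extend_plane p U"
  proof
    fix x assume "x \<in> extend_plane p (mat_vec n (sub_block p n g) ` U)"
    then obtain e u where x: "x = e + shift p (mat_vec n (sub_block p n g) u)" "supp p e" "u \<in> U"
      unfolding extend_plane_def by blast
    define r where "r = (\<lambda>i. if i \<le> p then mat_vec N g (shift p u) i else 0)"
    have "supp p (e - r)" unfolding r_def by (intro supp_diff x(2) supp_truncate[OF supp_mat_vec])
    then obtain e' where e': "supp p e'" "mat_vec N g e' = e - r"
      using upper_triangular_surj[OF ug(2) ug(1)] pnN by (metis le_add1 le_trans)
    have D: "mat_vec N g (shift p u) = r + shift p (mat_vec n (sub_block p n g) u)"
      unfolding r_def by (rule mat_vec_shift_decomp[OF ug(1) sU[rule_format, OF x(3)] pnN])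
    have "mat_vec N g (e' + shift p u) = (e - r) + (r + shift p (mat_vec n (sub_block p n g) u))"
      unfolding mat_vec_add e'(2) D ..
    also have "\<dots> = x" using x(1) by (simp add: algebra_simps)
    finally have "mat_vec N g (e' + shift p u) = x" .
    moreover have "e' + shift p u \<in> extend_plane p U" unfolding extend_plane_def using e'(1) x(3) by blast
    ultimately show "x \<in> mat_vec N g ` extend_plane p U" by blast
  qed
qed

definition block_embed :: "nat \<Rightarrow> nat \<Rightarrow> nat \<Rightarrow> cmatrix \<Rightarrow> cmatrix" where
  "block_embed p n N h = (\<lambda>i j. if i \<in> {1..N} \<and> j \<in> {1..N} then
      (if i \<in> {p+1..p+n} \<and> j \<in> {p+1..p+n} then h (i-p) (j-p) else if i = j then 1 else 0) else 0)"

lemma sub_block_embed: "sqmat n h \<Longrightarrow> p + n \<le> N \<Longrightarrow> sub_block p n (block_embed p n N h) = h"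
  by (auto simp: fun_eq_iff sub_block_entry block_embed_def sqmat_def)

lemma sum_block_embed_row:
  assumes pnN: "p + n \<le> N" and i: "i \<in> {p+1..p+n}"
  shows "(\<Sum>k=1..N. block_embed p n N a i k * f k) = (\<Sum>k=1..n. a (i-p) k * f (k+p))"
proof -
  have "(\<Sum>k=1..N. block_embed p n N a i k * f k) = (\<Sum>k=1..n. block_embed p n N a i (k+p) * f (k+p))"
    using i by (intro sum_block_shift[OF pnN]) (auto simp: block_embed_def)
  also have "\<dots> = (\<Sum>k=1..n. a (i-p) k * f (k+p))"
    using i pnN by (intro sum.cong) (auto simp: block_embed_def)
  finally show ?thesis .
qed

lemma sum_block_embed_row_outside:
  assumes i: "i \<in> {1..N}" "i \<notin> {p+1..p+n}"
  shows "(\<Sum>k=1..N. block_embed p n N a i k * f k) = f i"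
proof -
  have "(\<Sum>k=1..N. block_embed p n N a i k * f k) = (\<Sum>k=1..N. if k = i then f k else 0)"
    using i by (intro sum.cong) (auto simp: block_embed_def)
  then show ?thesis using i(1) by simp
qed

lemma block_embed_matmul:
  assumes pnN: "p + n \<le> N"
  shows "matmul N (block_embed p n N a) (block_embed p n N b) = block_embed p n N (matmul n a b)"
proof (intro ext)
  fix i j
  show "matmul N (block_embed p n N a) (block_embed p n N b) i j = block_embed p n N (matmul n a b) i j"
  proof (cases "i \<in> {1..N} \<and> j \<in> {1..N}")
    case False
    have "matmul N (block_embed p n N a) (block_embed p n N b) i j = 0"
      unfolding matmul_def using False by (simp only: if_False)
    moreover have "block_embed p n N (matmul n a b) i j = 0"
      unfolding block_embed_def using False by (simp only: if_False)
    ultimately show ?thesis by simp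
  next
    case ij: True
    show ?thesis
    proof (cases "i \<in> {p+1..p+n}")
      case i: True
      have "matmul N (block_embed p n N a) (block_embed p n N b) i j
          = (\<Sum>k=1..N. block_embed p n N a i k * block_embed p n N b k j)"
        using ij by (simp add: matmul_def)
      also have "\<dots> = (\<Sum>k=1..n. a (i-p) k * block_embed p n N b (k+p) j)"
        by (rule sum_block_embed_row[OF pnN i])
      also have "\<dots> = (if j \<in> {p+1..p+n} then (\<Sum>k=1..n. a (i-p) k * b k (j-p)) else 0)"
        using ij pnN by (auto simp: block_embed_def intro!: sum.cong sum.neutral)
      also have "\<dots> = block_embed p n N (matmul n a b) i j"
        using i ij by (auto simp: block_embed_def matmul_def)
      finally show ?thesis .
    next
      case i: False
      have "matmul N (block_embed p n N a) (block_embed p n N b) i j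
          = (\<Sum>k=1..N. block_embed p n N a i k * block_embed p n N b k j)"
        using ij by (simp add: matmul_def)
      also have "\<dots> = block_embed p n N b i j"
        using ij i by (intro sum_block_embed_row_outside) auto
      also have "\<dots> = block_embed p n N (matmul n a b) i j"
        using i ij by (auto simp: block_embed_def)
      finally show ?thesis .
    qed
  qed
qed

lemma block_embed_ident: "block_embed p n N (ident n) = ident N"
  by (auto simp: fun_eq_iff block_embed_def ident_def)

lemma sqmat_block_embed: "sqmat N (block_embed p n N h)"
  by (auto simp: sqmat_def block_embed_def split: if_splits)

lemma block_embed_GL: assumes "h \<in> GL n" "p + n \<le> N" shows "block_embed p n N h \<in> GL N"
proof -
  obtain h' where h': "sqmat n h'" "matmul n h h' = ident n" "matmul n h' h = ident n"
    using assms(1) unfolding GL_def by blast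
  have "matmul N (block_embed p n N h) (block_embed p n N h') = ident N"
    using block_embed_matmul[OF assms(2)] h'(2) block_embed_ident by metis
  moreover have "matmul N (block_embed p n N h') (block_embed p n N h) = ident N"
    using block_embed_matmul[OF assms(2)] h'(3) block_embed_ident by metis
  ultimately show ?thesis unfolding GL_def mem_Collect_eq
    by (intro conjI sqmat_block_embed exI[of _ "block_embed p n N h'"])
qed

lemma upper_triangular_block_embed: "upper_triangular h \<Longrightarrow> upper_triangular (block_embed p n N h)"
  unfolding upper_triangular_def block_embed_def by auto

lemma block_embed_borel: "h \<in> Defs.borel n \<Longrightarrow> p + n \<le> N \<Longrightarrow> block_embed p n N h \<in> Defs.borel N"
  using block_embed_GL upper_triangular_block_embed borel_iff by blast

lemma GL_row_nonzero: assumes "g \<in> GL N" "i \<in> {1..N}" shows "\<exists>k. g i k \<noteq> 0"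
proof (rule ccontr)
  assume "\<not> (\<exists>k. g i k \<noteq> 0)"
  then have z: "\<And>k. g i k = 0" by blast
  obtain h where "matmul N g h = ident N" using assms(1) unfolding GL_def by blast
  then have "matmul N g h i i = 1" using assms(2) by (simp add: ident_def)
  then show False using assms(2) by (simp add: matmul_def z)
qed

lemma same_block_refl:
  assumes "g \<in> levi N js" "i \<in> {1..N}" shows "same_block js i i"
proof -
  have "g \<in> GL N" using assms(1) by (simp add: levi_def)
  then obtain k where "g i k \<noteq> 0" using GL_row_nonzero assms(2) by blast
  then have "same_block js i k" using assms(1) by (simp add: levi_def)
  then show ?thesis unfolding same_block_def by blast
qed

lemma block_embed_levi:
  assumes g: "g \<in> levi N js" and hGL: "sub_block p n g \<in> GL n" and pnN: "p + n \<le> N"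
  shows "block_embed p n N (sub_block p n g) \<in> levi N js"
  unfolding levi_def mem_Collect_eq
proof (intro conjI allI impI)
  show "block_embed p n N (sub_block p n g) \<in> GL N" by (rule block_embed_GL[OF hGL pnN])
  fix i j assume nz: "block_embed p n N (sub_block p n g) i j \<noteq> 0"
  then have ij: "i \<in> {1..N}" "j \<in> {1..N}" by (auto simp: block_embed_def split: if_splits)
  show "same_block js i j"
  proof (cases "i \<in> {p+1..p+n} \<and> j \<in> {p+1..p+n}")
    case True
    then have "i - p \<in> {1..n}" "j - p \<in> {1..n}" "i - p + p = i" "j - p + p = j" by auto
    then have "block_embed p n N (sub_block p n g) i j = g i j" using True ij unfolding block_embed_def sub_block_entry
      by (simp only: if_True simp_thms)
    then have "g i j \<noteq> 0" using nz by simp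
    then show ?thesis using g by (simp add: levi_def)
  next
    case False
    then have "i = j" using nz ij by (auto simp: block_embed_def split: if_splits)
    then show ?thesis using same_block_refl[OF g ij(1)] by simp
  qed
qed

lemma ident_borel: "ident N \<in> Defs.borel N"
proof -
  have "matmul N (ident N) (ident N) = ident N"
  proof (intro ext)
    fix i j
    show "matmul N (ident N) (ident N) i j = ident N i j"
    proof (cases "i \<in> {1..N} \<and> j \<in> {1..N}")
      case True
      have "(\<Sum>k=1..N. ident N i k * ident N k j) = (\<Sum>k=1..N. if k = i then ident N k j else 0)"
        using True by (intro sum.cong) (auto simp: ident_def)
      also have "\<dots> = ident N i j" using True by (simp add: sum.delta')
      finally show ?thesis using True by (simp add: matmul_def)
    next
      case False
      have "matmul N (ident N) (ident N) i j = 0"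
        unfolding matmul_def using False by (simp only: if_False)
      moreover have "ident N i j = 0" unfolding ident_def using False by auto
      ultimately show ?thesis by simp
    qed
  qed
  moreover have "sqmat N (ident N)" by (auto simp: sqmat_def ident_def split: if_splits)
  ultimately have "ident N \<in> GL N" unfolding GL_def by blast
  moreover have "upper_triangular (ident N)" by (auto simp: upper_triangular_def ident_def)
  ultimately show ?thesis using borel_iff by blast
qed

section \<open>The reduction of a Schubert variety\<close>

lemma red_p_prefix:
  shows "red_p w \<le> length w" and "\<forall>i\<in>{1..red_p w}. w!(i-1) = i"
proof -
  let ?P = "\<lambda>p. p \<le> length w \<and> (\<forall>i\<in>{1..p}. w!(i-1) = i)"
  have "?P 0" by simp
  then have "?P (Greatest ?P)" by (rule GreatestI_nat[of _ _ "length w"]) blast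
  then show "red_p w \<le> length w" "\<forall>i\<in>{1..red_p w}. w!(i-1) = i" unfolding red_p_def by blast+
qed

lemma red_p_maximal:
  assumes "red_p w < length w" shows "w ! (red_p w) \<noteq> red_p w + 1"
proof
  assume a: "w ! (red_p w) = red_p w + 1"
  let ?P = "\<lambda>p. p \<le> length w \<and> (\<forall>i\<in>{1..p}. w!(i-1) = i)"
  have "?P (red_p w + 1)"
  proof (intro conjI ballI)
    show "red_p w + 1 \<le> length w" using assms by simp
    fix i assume i: "i \<in> {1..red_p w + 1}"
    show "w ! (i - 1) = i"
    proof (cases "i = red_p w + 1")
      case True then show ?thesis using a by simp
    next
      case False then show ?thesis using red_p_prefix(2) i by auto
    qed
  qed
  then have "red_p w + 1 \<le> Greatest ?P" by (rule Greatest_le_nat[of _ _ "length w"]) blast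
  then show False unfolding red_p_def by simp
qed

lemma Iseq_nth_ge:
  assumes w: "w \<in> Iseq d N" shows "t < d \<Longrightarrow> t + 1 \<le> w ! t"
proof (induction t)
  case 0
  then have "w ! 0 \<in> set w" using w by (simp add: Iseq_def)
  then show ?case using w by (auto simp: Iseq_def)
next
  case (Suc t)
  then have "w ! t < w ! Suc t" using w sorted_wrt_nth_less[of "(<)" w] by (simp add: Iseq_def)
  then show ?case using Suc by simp
qed

lemma Iseq_nth_le_last:
  assumes w: "w \<in> Iseq d N" and t: "t < d" shows "w ! t \<le> last w"
proof -
  have len: "length w = d" and sorted: "sorted_wrt (<) w" using w by (auto simp: Iseq_def)
  moreover have "w \<noteq> []" using len t by auto
  ultimately have "last w = w ! (d - 1)" by (simp add: last_conv_nth)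
  moreover have "w ! t \<le> w ! (d - 1)"
  proof (cases "t = d - 1")
    case False
    then have "t < d - 1" using t by simp
    then show ?thesis using sorted_wrt_nth_less[OF sorted, of t "d - 1"] len t by simp
  qed simp
  ultimately show ?thesis by simp
qed

lemma Iseq_last_le:
  assumes w: "w \<in> Iseq d N" and d: "1 \<le> d" shows "last w \<le> N"
proof -
  have "w \<noteq> []" using w d by (auto simp: Iseq_def)
  then have "last w \<in> set w" by (rule last_in_set)
  then show ?thesis using w by (auto simp: Iseq_def)
qed

lemma red_p_le: "w \<in> Iseq d N \<Longrightarrow> red_p w \<le> d"
  using red_p_prefix(1)[of w] by (simp add: Iseq_def)

lemma red_p_le_last:
  assumes w: "w \<in> Iseq d N" and d: "1 \<le> d" shows "red_p w \<le> last w"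
proof -
  have "d \<le> w ! (d-1)" using Iseq_nth_ge[OF w, of "d-1"] d by simp
  moreover have "w ! (d-1) \<le> last w" using Iseq_nth_le_last[OF w, of "d-1"] d by simp
  ultimately show ?thesis using red_p_le[OF w] by linarith
qed

lemma red_p_add_red_N: "w \<in> Iseq d N \<Longrightarrow> 1 \<le> d \<Longrightarrow> red_p w + red_N w = last w"
  using red_p_le_last by (simp add: red_N_def)

lemma red_d_eq: "w \<in> Iseq d N \<Longrightarrow> red_d w = d - red_p w"
  by (simp add: red_d_def Iseq_def)

lemma length_red_w: "length (red_w w) = length w - red_p w"
  by (simp add: red_w_def)

lemma nth_red_w: "t < length w - red_p w \<Longrightarrow> red_w w ! t = w ! (red_p w + t) - red_p w"
  by (simp add: red_w_def)

lemma Suc_red_p_notin: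
  assumes w: "w \<in> Iseq d N"
  shows "red_p w + 1 \<notin> set w"
proof
  let ?p = "red_p w"
  assume "?p + 1 \<in> set w"
  then obtain t where t: "t < length w" "w ! t = ?p + 1" by (auto simp: in_set_conv_nth)
  have len: "length w = d" and sorted: "sorted_wrt (<) w" using w by (auto simp: Iseq_def)
  show False
  proof (cases "t < ?p")
    case True
    then have "w ! ((t+1) - 1) = t + 1" using red_p_prefix(2)[of w] by force
    then show False using t True by simp
  next
    case False
    then have pl: "?p < length w" using t by simp
    have "w ! ?p \<noteq> ?p + 1" by (rule red_p_maximal[OF pl])
    then have "w ! ?p \<ge> ?p + 2" using Iseq_nth_ge[OF w, of ?p] pl len by simp
    moreover have "w ! ?p \<le> w ! t"
      using False sorted_wrt_nth_less[OF sorted, of ?p t] t by (cases "t = ?p") auto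
    ultimately show False using t by simp
  qed
qed

definition coord_frame :: "nat list \<Rightarrow> cmatrix" where
  "coord_frame w = (\<lambda>i j. if j \<in> {1..length w} \<and> i = w!(j-1) then 1 else 0)"

lemma coord_plane_coord_frame: "coord_plane N w = colspan N (length w) (coord_frame w)"
  by (simp add: coord_plane_def coord_frame_def)

lemma coord_plane_vanishes:
  assumes v: "v \<in> coord_plane N w" and i: "i \<notin> set w" shows "v i = 0"
proof -
  obtain c where c: "v = (\<lambda>i. if i \<in> {1..N} then \<Sum>j=1..length w. c j * coord_frame w i j else 0)"
    using v unfolding coord_plane_coord_frame colspan_def by blast
  have "coord_frame w i j = 0" if "j \<in> {1..length w}" for j
  proof -
    have "w ! (j-1) \<in> set w" using that by (intro nth_mem) auto
    then show ?thesis using i by (auto simp: coord_frame_def)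
  qed
  then show ?thesis unfolding c by simp
qed

lemma frame_coord_frame:
  assumes "w \<in> Iseq d N"
  shows "frame N d (coord_frame w)"
  unfolding frame_def
proof (rule conjI; intro allI impI)
  have len: "length w = d" and sorted: "sorted_wrt (<) w" and range: "set w \<subseteq> {1..N}"
    using assms by (auto simp: Iseq_def)
  {
    fix i j assume "coord_frame w i j \<noteq> 0"
    then have "j \<in> {1..d}" "i = w ! (j-1)" using len by (auto simp: coord_frame_def split: if_splits)
    moreover have "w ! (j-1) \<in> set w" using \<open>j \<in> {1..d}\<close> len by (intro nth_mem) auto
    ultimately show "i \<in> {1..N} \<and> j \<in> {1..d}" using range by auto
  }
  fix c :: "nat \<Rightarrow> complex" assume c: "\<forall>i. (\<Sum>j=1..d. c j * coord_frame w i j) = 0"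
  have dist: "distinct w" using sorted by (simp add: strict_sorted_iff)
  show "\<forall>j\<in>{1..d}. c j = 0"
  proof
    fix j0 assume j0: "j0 \<in> {1..d}"
    have "(\<Sum>j=1..d. c j * coord_frame w (w!(j0-1)) j) = (\<Sum>j=1..d. if j = j0 then c j else 0)"
    proof (intro sum.cong refl)
      fix j assume j: "j \<in> {1..d}"
      have "w!(j0-1) = w!(j-1) \<longleftrightarrow> j0 - 1 = j - 1" using nth_eq_iff_index_eq[OF dist] j j0 len by auto
      then show "c j * coord_frame w (w!(j0-1)) j = (if j = j0 then c j else 0)"
        using j j0 len by (auto simp: coord_frame_def)
    qed
    also have "\<dots> = c j0" using j0 by (simp add: sum.delta')
    finally show "c j0 = 0" using c by simp
  qed
qed

lemma coord_frame_eq_extend_frame: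
  assumes w: "w \<in> Iseq d N" and d: "1 \<le> d"
  shows "coord_frame w = extend_frame (red_p w) (red_N w) d (coord_frame (red_w w))"
proof (intro ext)
  fix i j
  let ?p = "red_p w" and ?n = "red_N w"
  have len: "length w = d" using w by (simp add: Iseq_def)
  show "coord_frame w i j = extend_frame ?p ?n d (coord_frame (red_w w)) i j"
  proof (cases "j \<in> {1..?p}")
    case True
    then have "w ! (j-1) = j" using red_p_prefix(2) by blast
    then show ?thesis using True len red_p_le[OF w] by (auto simp: coord_frame_def extend_frame_def)
  next
    case low: False
    show ?thesis
    proof (cases "j \<in> {?p+1..d}")
      case True
      have wj: "j \<le> w ! (j-1)" "w ! (j-1) \<le> ?p + ?n"
        using Iseq_nth_ge[OF w, of "j-1"] Iseq_nth_le_last[OF w, of "j-1"] red_p_add_red_N[OF w d] True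
        by auto
      have "j - ?p \<in> {1..length (red_w w)}" using True len by (auto simp: length_red_w)
      moreover have "red_w w ! (j - ?p - 1) = w ! (j-1) - ?p"
      proof -
        have "j - ?p - 1 < length w - ?p" using True len by auto
        moreover have "?p + (j - ?p - 1) = j - 1" using True by auto
        ultimately show ?thesis using nth_red_w by metis
      qed
      moreover have "?p + 1 \<le> i \<Longrightarrow> i - ?p = w ! (j-1) - ?p \<longleftrightarrow> i = w ! (j-1)"
        using wj True by linarith
      ultimately have "extend_frame ?p ?n d (coord_frame (red_w w)) i j = (if i = w ! (j-1) then 1 else 0)"
        using low True wj by (auto simp: extend_frame_def coord_frame_def)
      also have "\<dots> = coord_frame w i j" using True len by (auto simp: coord_frame_def)
      finally show ?thesis by simp
    next
      case False
      then show ?thesis using low len by (auto simp: coord_frame_def extend_frame_def)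
    qed
  qed
qed

lemma coord_plane_eq_extend_plane:
  assumes w: "w \<in> Iseq d N" and d: "1 \<le> d"
  shows "coord_plane N w = extend_plane (red_p w) (coord_plane (red_N w) (red_w w))"
proof -
  have len: "length w = d" using w by (simp add: Iseq_def)
  have pnN: "red_p w + red_N w \<le> N" using red_p_add_red_N[OF w d] Iseq_last_le[OF w d] by simp
  have "coord_plane N w = colspan N d (extend_frame (red_p w) (red_N w) d (coord_frame (red_w w)))"
    using coord_plane_coord_frame coord_frame_eq_extend_frame[OF w d] len by simp
  also have "\<dots> = extend_plane (red_p w) (colspan (red_N w) (d - red_p w) (coord_frame (red_w w)))"
    by (rule colspan_extend_frame[OF red_p_le[OF w] pnN])
  also have "\<dots> = extend_plane (red_p w) (coord_plane (red_N w) (red_w w))"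
    using coord_plane_coord_frame length_red_w len by simp
  finally show ?thesis .
qed

lemma orbit_extend_plane:
  assumes G: "G \<subseteq> Defs.borel N" and U: "\<forall>u\<in>U. supp n u" and pnN: "p + n \<le> N"
  shows "(\<lambda>g. act N g (extend_plane p U)) ` G = extend_plane p ` (\<lambda>h. act n h U) ` sub_block p n ` G"
proof -
  have "act N g (extend_plane p U) = extend_plane p (act n (sub_block p n g) U)" if "g \<in> G" for g
    using borel_act_extend_plane[OF subsetD[OF G that] U pnN] by (simp add: act_mat_vec)
  then show ?thesis by (simp add: image_image cong: image_cong)
qed

lemma sub_block_borel_image:
  assumes pnN: "p + n \<le> N" shows "sub_block p n ` Defs.borel N = Defs.borel n"
proof
  show "sub_block p n ` Defs.borel N \<subseteq> Defs.borel n" using sub_block_borel[OF _ pnN] by blast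
  show "Defs.borel n \<subseteq> sub_block p n ` Defs.borel N"
  proof
    fix h assume h: "h \<in> Defs.borel n"
    then have "h = sub_block p n (block_embed p n N h)"
      using sub_block_embed[OF _ pnN] by (simp add: borel_iff GL_def)
    then show "h \<in> sub_block p n ` Defs.borel N" using block_embed_borel[OF h pnN] by blast
  qed
qed

lemma sub_block_levi_borel_image:
  assumes pnN: "p + n \<le> N"
  shows "sub_block p n ` (levi N js \<inter> Defs.borel N) = sub_block p n ` levi N js \<inter> Defs.borel n"
proof
  show "sub_block p n ` (levi N js \<inter> Defs.borel N) \<subseteq> sub_block p n ` levi N js \<inter> Defs.borel n"
    using sub_block_borel[OF _ pnN] by blast
  show "sub_block p n ` levi N js \<inter> Defs.borel n \<subseteq> sub_block p n ` (levi N js \<inter> Defs.borel N)"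
  proof
    fix h assume "h \<in> sub_block p n ` levi N js \<inter> Defs.borel n"
    then obtain g where g: "g \<in> levi N js" and h: "h = sub_block p n g" "h \<in> Defs.borel n" by blast
    then have "h \<in> GL n" "sqmat n h" by (auto simp: borel_iff GL_def)
    then have "block_embed p n N h \<in> levi N js \<inter> Defs.borel N" "h = sub_block p n (block_embed p n N h)"
      using block_embed_levi[OF g _ pnN] block_embed_borel[OF h(2) pnN] sub_block_embed[OF _ pnN] h(1)
      by auto
    then show "h \<in> sub_block p n ` (levi N js \<inter> Defs.borel N)" by blast
  qed
qed

lemma schubert_supp: "U \<in> schubert w d N \<Longrightarrow> \<forall>u\<in>U. supp N u"
  unfolding schubert_def by (rule gclosure_supp)

lemma schubert_eq_extend_plane:
  assumes w: "w \<in> Iseq d N" and d: "1 \<le> d"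
  shows "schubert w d N = extend_plane (red_p w) ` schubert (red_w w) (red_d w) (red_N w)"
proof -
  define p n where "p = red_p w" and "n = red_N w"
  define Ob where "Ob = (\<lambda>h. act n h (coord_plane n (red_w w))) ` Defs.borel n"
  have pnN: "p + n \<le> N" using red_p_add_red_N[OF w d] Iseq_last_le[OF w d] by (simp add: p_def n_def)
  have "\<forall>u\<in>coord_plane n (red_w w). supp n u" unfolding coord_plane_def using colspan_supp by blast
  then have "(\<lambda>g. act N g (coord_plane N w)) ` Defs.borel N = extend_plane p ` Ob"
    unfolding coord_plane_eq_extend_plane[OF w d] Ob_def p_def n_def
    using orbit_extend_plane[OF subset_refl _ pnN[unfolded p_def n_def]] sub_block_borel_image[OF pnN[unfolded p_def n_def]]
    by simp
  moreover have "\<forall>U\<in>Ob. \<forall>u\<in>U. supp n u" unfolding Ob_def act_mat_vec using supp_mat_vec by blast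
  ultimately have "schubert w d N = extend_plane p ` gclosure n (d-p) Ob"
    unfolding schubert_def using gclosure_image_extend_plane[OF red_p_le[OF w, folded p_def] pnN] p_def by simp
  then show ?thesis by (simp add: schubert_def Ob_def p_def n_def red_d_eq[OF w])
qed

lemma schubert_contains_first_coords:
  assumes w: "w \<in> Iseq d N" and d: "1 \<le> d" and V: "V \<in> schubert w d N" and e: "supp (red_p w) e"
  shows "e \<in> V"
proof -
  obtain U where U: "U \<in> schubert (red_w w) (red_d w) (red_N w)" "V = extend_plane (red_p w) U"
    using V schubert_eq_extend_plane[OF w d] by blast
  have "0 \<in> U" using U(1) colspan_zero unfolding schubert_def gclosure_def by blast
  then have "e + shift (red_p w) 0 \<in> V" using U(2) e unfolding extend_plane_def by blast
  then show ?thesis by simp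
qed

lemma coord_plane_in_schubert:
  assumes w: "w \<in> Iseq d N"
  shows "coord_plane N w \<in> schubert w d N"
proof -
  have cp: "coord_plane N w = colspan N d (coord_frame w)"
    using coord_plane_coord_frame w by (simp add: Iseq_def)
  have "act N (ident N) (coord_plane N w) = coord_plane N w"
    unfolding act_mat_vec using mat_vec_ident colspan_supp cp by (simp add: image_def)
  then have "colspan N d (coord_frame w) \<in> (\<lambda>g. act N g (coord_plane N w)) ` Defs.borel N"
    using ident_borel cp by (metis image_eqI)
  then show ?thesis unfolding schubert_def gclosure_def mem_Collect_eq
    by (intro exI[of _ "coord_frame w"] exI[of _ "\<lambda>k. coord_frame w"] conjI frame_coord_frame[OF w] cp
        allI tendsto_const)
qed

section \<open>Stability and the reduced Levi subgroup\<close>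

definition swap_mat :: "nat \<Rightarrow> nat \<Rightarrow> cmatrix" where
  "swap_mat N a = (\<lambda>i j. if i \<in> {1..N} \<and> j \<in> {1..N} \<and> j = Transposition.transpose a (Suc a) i then 1 else 0)"

lemma swap_mat_GL:
  assumes a: "1 \<le> a" "Suc a \<le> N" shows "swap_mat N a \<in> GL N"
proof -
  let ?t = "Transposition.transpose a (Suc a)"
  have range: "?t i \<in> {1..N}" if "i \<in> {1..N}" for i
    using a that by (cases "i = a"; cases "i = Suc a") simp_all
  have entry: "swap_mat N a i k = (if k = ?t i then 1 else 0)" if "i \<in> {1..N}" "k \<in> {1..N}" for i k
    using that by (simp add: swap_mat_def)
  have "matmul N (swap_mat N a) (swap_mat N a) i j = ident N i j" for i j
  proof (cases "i \<in> {1..N} \<and> j \<in> {1..N}")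
    case True
    have "(\<Sum>k=1..N. swap_mat N a i k * swap_mat N a k j) = (\<Sum>k=1..N. if k = ?t i then swap_mat N a k j else 0)"
      using True entry by (intro sum.cong) simp_all
    also have "\<dots> = swap_mat N a (?t i) j" using range True by (simp add: sum.delta')
    also have "\<dots> = (if j = i then 1 else 0)" using True range entry[of "?t i" j] by auto
    finally show ?thesis using True by (simp add: matmul_def ident_def)
  next
    case False
    have "matmul N (swap_mat N a) (swap_mat N a) i j = 0"
      unfolding matmul_def using False by (simp only: if_False)
    moreover have "ident N i j = 0" unfolding ident_def using False by auto
    ultimately show ?thesis by simp
  qed
  moreover have "sqmat N (swap_mat N a)" by (simp add: sqmat_def swap_mat_def)
  ultimately show ?thesis unfolding GL_def by blast
qed

lemma swap_mat_levi:
  assumes g: "g \<in> levi N js" and a: "1 \<le> a" "Suc a \<le> N" and block: "same_block js a (Suc a)"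
  shows "swap_mat N a \<in> levi N js"
  unfolding levi_def mem_Collect_eq
proof (intro conjI swap_mat_GL[OF a] allI impI)
  fix i j assume "swap_mat N a i j \<noteq> 0"
  then have ij: "i \<in> {1..N}" "j = Transposition.transpose a (Suc a) i" by (auto simp: swap_mat_def split: if_splits)
  show "same_block js i j"
  proof (cases "i = a \<or> i = Suc a")
    case True
    then show ?thesis using ij block unfolding same_block_def by auto
  next
    case False
    then show ?thesis using ij same_block_refl[OF g ij(1)] by simp
  qed
qed

lemma mat_vec_swap_mat:
  assumes a: "1 \<le> a" "Suc a \<le> N" shows "mat_vec N (swap_mat N a) v a = v (Suc a)"
proof -
  have "mat_vec N (swap_mat N a) v a = (\<Sum>j=1..N. swap_mat N a a j * v j)"
    using a by (simp add: mat_vec_def)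
  also have "\<dots> = (\<Sum>j=1..N. if j = Suc a then v j else 0)"
    using a by (intro sum.cong) (auto simp: swap_mat_def)
  also have "\<dots> = v (Suc a)" using a by simp
  finally show ?thesis .
qed

text \<open>For a stable quadruple no block of \<open>L\<close> meets both \<open>{1..p}\<close> and \<open>{p+1..N}\<close>: otherwise the
  transposition of \<open>p\<close> and \<open>p+1\<close> lies in \<open>L\<close> and moves the coordinate plane of \<open>w\<close> out of the planes
  containing \<open>E\<^sub>p\<close>, because \<open>p+1 \<notin> w\<close>.\<close>

lemma stable_levi_preserves_first_coords:
  assumes w: "w \<in> Iseq d N" and d: "1 \<le> d"
    and st: "stable w d N (levi N js)" and g: "g \<in> levi N js" and gij: "g i j \<noteq> 0"
    and j: "j \<le> red_p w"
  shows "i \<le> red_p w"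
proof (rule ccontr)
  define p where "p = red_p w"
  assume "\<not> i \<le> red_p w"
  then have pi: "p < i" by (simp add: p_def)
  have iN: "i \<le> N" using gij g unfolding levi_def GL_def sqmat_def by auto
  obtain k where k: "Suc k < length js" "js!k < i" "i \<le> js!Suc k" "js!k < j" "j \<le> js!Suc k"
    using g gij unfolding levi_def same_block_def by blast
  have a: "1 \<le> p" "Suc p \<le> N" using k(4) j pi iN by (auto simp: p_def)
  have "same_block js p (Suc p)" unfolding same_block_def using k j pi by (auto simp: p_def)
  then have "act N (swap_mat N p) (coord_plane N w) \<in> schubert w d N"
    using st swap_mat_levi[OF g a] coord_plane_in_schubert[OF w] unfolding stable_def by blast
  moreover have "supp p (unit_vec p)" using a(1) by (auto simp: supp_def unit_vec_def)
  ultimately have "unit_vec p \<in> act N (swap_mat N p) (coord_plane N w)"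
    using schubert_contains_first_coords[OF w d] by (simp add: p_def)
  then obtain v where v: "v \<in> coord_plane N w" "unit_vec p = mat_vec N (swap_mat N p) v"
    unfolding act_mat_vec by blast
  have "1 = mat_vec N (swap_mat N p) v p" using fun_cong[OF v(2), of p] by (simp add: unit_vec_def)
  also have "\<dots> = v (Suc p)" by (rule mat_vec_swap_mat[OF a])
  also have "\<dots> = 0" using coord_plane_vanishes[OF v(1)] Suc_red_p_notin[OF w] by (simp add: p_def)
  finally show False by simp
qed

lemma red_L_eq:
  assumes w: "w \<in> Iseq d N" and d: "1 \<le> d"
  shows "red_L w L = sub_block (red_p w) (red_N w) ` L"
  using red_p_add_red_N[OF w d] by (simp add: red_L_def)

lemma unshift_mat_vec_extend_plane:
  assumes g: "\<forall>i j. g i j \<noteq> 0 \<longrightarrow> j \<le> p \<longrightarrow> i \<le> p" and pnN: "p + n \<le> N"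
    and e: "supp p e" and u: "supp n u"
  shows "unshift p n (mat_vec N g (e + shift p u)) = mat_vec n (sub_block p n g) u"
proof -
  have "unshift p n (mat_vec N g e) = 0" by (rule unshift_supp[OF mat_vec_supp[OF g e]])
  moreover have "unshift p n (mat_vec N g (shift p u)) = mat_vec n (sub_block p n g) u"
  proof
    fix r
    show "unshift p n (mat_vec N g (shift p u)) r = mat_vec n (sub_block p n g) u r"
    proof (cases "r \<in> {1..n}")
      case True
      then show ?thesis using mat_vec_shift_row[OF u pnN True] by (simp add: unshift_def)
    next
      case False
      have "unshift p n (mat_vec N g (shift p u)) r = 0"
        unfolding unshift_def using False by (simp only: if_False)
      then show ?thesis using mat_vec_out[OF False] by simp
    qed
  qed
  ultimately show ?thesis by (simp add: mat_vec_add unshift_add)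
qed

lemma stable_reduction:
  assumes w: "w \<in> Iseq d N" and d: "1 \<le> d" and st: "stable w d N (levi N js)"
  shows "stable (red_w w) (red_d w) (red_N w) (red_L w (levi N js))"
  unfolding stable_def
proof (intro ballI)
  define p n Xb where "p = red_p w" and "n = red_N w" and "Xb = schubert (red_w w) (red_d w) (red_N w)"
  fix h U assume h: "h \<in> red_L w (levi N js)" and U: "U \<in> Xb"
  have pnN: "p + n \<le> N" using red_p_add_red_N[OF w d] Iseq_last_le[OF w d] by (simp add: p_def n_def)
  have Xw: "schubert w d N = extend_plane p ` Xb" using schubert_eq_extend_plane[OF w d] p_def Xb_def by simp
  obtain g where g: "g \<in> levi N js" "h = sub_block p n g" using h red_L_eq[OF w d] p_def n_def by blast
  have g_E: "\<forall>i j. g i j \<noteq> 0 \<longrightarrow> j \<le> p \<longrightarrow> i \<le> p"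
    unfolding p_def using stable_levi_preserves_first_coords[OF w d st g(1)] by blast
  have sU: "\<forall>u\<in>U. supp n u" using U schubert_supp unfolding Xb_def n_def by blast
  have "extend_plane p U \<in> schubert w d N" using U Xw by blast
  then have "act N g (extend_plane p U) \<in> schubert w d N" using st g(1) unfolding stable_def by blast
  then obtain U' where U': "U' \<in> Xb" "act N g (extend_plane p U) = extend_plane p U'"
    using Xw by blast
  have "unshift p n ` act N g (extend_plane p U) = mat_vec n h ` U"
  proof (intro equalityI subsetI)
    fix x assume "x \<in> unshift p n ` act N g (extend_plane p U)"
    then obtain e u where "x = unshift p n (mat_vec N g (e + shift p u))" "supp p e" "u \<in> U"
      unfolding act_mat_vec extend_plane_def by blast
    then show "x \<in> mat_vec n h ` U" using unshift_mat_vec_extend_plane[OF g_E pnN] sU g(2) by auto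
  next
    fix x assume "x \<in> mat_vec n h ` U"
    then obtain u where u: "u \<in> U" "x = mat_vec n h u" by blast
    have "0 + shift p u \<in> extend_plane p U" unfolding extend_plane_def using u(1) supp_0 by blast
    moreover have "unshift p n (mat_vec N g (0 + shift p u)) = x"
      using unshift_mat_vec_extend_plane[OF g_E pnN supp_0 sU[rule_format, OF u(1)]] u(2) g(2) by simp
    ultimately show "x \<in> unshift p n ` act N g (extend_plane p U)" unfolding act_mat_vec by blast
  qed
  moreover have "\<forall>u\<in>U'. supp n u" using U'(1) schubert_supp unfolding Xb_def n_def by blast
  then have "unshift p n ` extend_plane p U' = U'" by (rule unshift_extend_plane)
  ultimately have "act n h U = U'" using U'(2) by (simp add: act_mat_vec)
  then show "act (red_N w) h U \<in> Xb" using U'(1) n_def by simp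
qed

lemma levi_borel_orbit_extend_plane:
  assumes w: "w \<in> Iseq d N" and d: "1 \<le> d" and U: "\<forall>u\<in>U. supp (red_N w) u"
  shows "(\<lambda>g. act N g (extend_plane (red_p w) U)) ` (levi N js \<inter> Defs.borel N)
    = extend_plane (red_p w) ` (\<lambda>h. act (red_N w) h U) ` (red_L w (levi N js) \<inter> Defs.borel (red_N w))"
proof -
  have pnN: "red_p w + red_N w \<le> N" using red_p_add_red_N[OF w d] Iseq_last_le[OF w d] by simp
  show ?thesis
    using orbit_extend_plane[OF _ U pnN, of "levi N js \<inter> Defs.borel N"]
    by (simp add: red_L_eq[OF w d] sub_block_levi_borel_image[OF pnN])
qed

section \<open>Transfer of sphericity\<close>

lemma rel_open_extend_plane_iff:
  assumes pd: "p \<le> d" and pnN: "p + n \<le> N"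
    and X: "\<forall>U\<in>X. \<forall>u\<in>U. supp n u" and Orb: "\<forall>U\<in>Orb. \<forall>u\<in>U. supp n u"
  shows "Defs.rel_open N d (extend_plane p ` Orb) (extend_plane p ` X) \<longleftrightarrow> Defs.rel_open n (d-p) Orb X"
proof -
  let ?A = "{U. \<forall>u\<in>U. supp n u}"
  note inj = inj_on_extend_plane[of p n]
  have XA: "X \<subseteq> ?A" and OrbA: "Orb \<subseteq> ?A" and clA: "gclosure n (d-p) (X - Orb) \<subseteq> ?A"
    using X Orb gclosure_supp by blast+
  have "extend_plane p ` X - extend_plane p ` Orb = extend_plane p ` (X - Orb)"
    using inj_on_image_set_diff[OF inj _ OrbA] XA by blast
  moreover have "gclosure N d (extend_plane p ` (X - Orb)) = extend_plane p ` gclosure n (d-p) (X - Orb)"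
    using X by (intro gclosure_image_extend_plane[OF pd pnN]) blast
  moreover have "extend_plane p ` Orb \<inter> extend_plane p ` gclosure n (d-p) (X - Orb)
      = extend_plane p ` (Orb \<inter> gclosure n (d-p) (X - Orb))"
    by (rule inj_on_image_Int[OF inj OrbA clA, symmetric])
  ultimately show ?thesis
    unfolding Defs.rel_open_def by (simp add: inj_on_image_subset_iff[OF inj OrbA XA])
qed

lemma dense_extend_plane_iff:
  assumes pd: "p \<le> d" and pnN: "p + n \<le> N"
    and X: "\<forall>U\<in>X. \<forall>u\<in>U. supp n u" and Orb: "\<forall>U\<in>Orb. \<forall>u\<in>U. supp n u"
  shows "extend_plane p ` X \<subseteq> gclosure N d (extend_plane p ` Orb) \<longleftrightarrow> X \<subseteq> gclosure n (d-p) Orb"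
proof -
  have "X \<subseteq> {U. \<forall>u\<in>U. supp n u}" "gclosure n (d-p) Orb \<subseteq> {U. \<forall>u\<in>U. supp n u}"
    using X gclosure_supp by blast+
  then show ?thesis
    using gclosure_image_extend_plane[OF pd pnN Orb] inj_on_image_subset_iff[OF inj_on_extend_plane] by simp
qed

theorem proposition4p3:
  fixes w :: "nat list" and d N :: nat and js :: "nat list"
  assumes "1 \<le> d" and "d < N"
    and "w \<in> Iseq d N"
    and "levi_data N js"
    and "stable w d N (levi N js)"
    and "w \<noteq> [1..<d+1]"
  shows "spherical w d N (levi N js) \<longleftrightarrow>
         spherical (red_w w) (red_d w) (red_N w) (red_L w (levi N js))"
proof -
  note w = assms(3) and d = assms(1)
  define p n Xb where "p = red_p w" and "n = red_N w" and "Xb = schubert (red_w w) (red_d w) (red_N w)"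
  define orbit where "orbit U = (\<lambda>h. act n h U) ` (red_L w (levi N js) \<inter> Defs.borel n)" for U
  have pd: "p \<le> d" and red_d: "red_d w = d - p" using red_p_le[OF w] red_d_eq[OF w] by (simp_all add: p_def)
  have pnN: "p + n \<le> N" using red_p_add_red_N[OF w d] Iseq_last_le[OF w d] by (simp add: p_def n_def)
  have Xw: "schubert w d N = extend_plane p ` Xb" using schubert_eq_extend_plane[OF w d] by (simp add: p_def Xb_def)
  have Xb_supp: "\<forall>U\<in>Xb. \<forall>u\<in>U. supp n u" using schubert_supp by (simp add: Xb_def n_def)
  have orbit_supp: "\<forall>V\<in>orbit U. \<forall>u\<in>V. supp n u" for U unfolding orbit_def act_mat_vec using supp_mat_vec by blast
  have orbit_eq: "(\<lambda>g. act N g (extend_plane p U)) ` (levi N js \<inter> Defs.borel N) = extend_plane p ` orbit U"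
    if "U \<in> Xb" for U
    using levi_borel_orbit_extend_plane[OF w d] Xb_supp that by (simp add: orbit_def p_def n_def)
  show ?thesis
    unfolding spherical_def Let_def Xw
    using assms(5) stable_reduction[OF w d assms(5)] orbit_eq
      rel_open_extend_plane_iff[OF pd pnN Xb_supp orbit_supp] dense_extend_plane_iff[OF pd pnN Xb_supp orbit_supp]
    by (simp add: Xb_def orbit_def red_d n_def)
qed

end
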